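(* Let $R$ be a commutative ring and let $(A,d)$ be a left dg-semiprimary, left dg-Artinian differential graded $R$-algebra whose dg-radical $\mathrm{dgrad}_2(A)$ is nilpotent. Then $(A,d)$ is left dg-Noetherian and acyclic.
   Context: A differential graded (dg) $R$-algebra $(A,d)$ is a $\mathbb{Z}$-graded $R$-algebra $A$ with an $R$-linear degree-$1$ endomorphism $d$, $d^2=0$, $d(ab)=d(a)b+(-1)^{|a|}a\,d(b)$ for homogeneous $a,b$. A left dg-module $(M,\delta)$ is a graded left $A$-module with a degree-$1$ map $\delta$, $\delta^2=0$, $\delta(am)=d(a)m+(-1)^{|a|}a\,\delta(m)$; dg-submodules are graded submodules stable under $\delta$; $(S,\delta)$ is dg-simple if $S\ne0$ and its only dg-submodules are $0,S$. $(A,d)$ is left dg-Noetherian (resp. left dg-Artinian) if $A$, as left dg-module over itself, satisfies the ascending (resp. descending) chain condition on dg-submodules (left dg-ideals). Acyclic means $\ker(d)=\operatorname{im}(d)$. The dg-radical is $\mathrm{dgrad}_2(A)=\bigcap_{(S,\delta)}\operatorname{ann}(S,\delta)$, the intersection over all dg-simple left dg-modules of their left annihilators in $A$. $(A,d)$ is left dg-semiprimary if (i) $(A/\mathrm{dgrad}_2(A),\bar d)$ is semisimple in the categorical sense, i.e. every short exact sequence of left dg-modules over it splits, and (ii) every homogeneous idempotent of $A/\mathrm{dgrad}_2(A)$ is the image of a homogeneous idempotent of $A$ under the natural map. *)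

theory Defs
  imports Main
begin

text \<open>The dg R-algebra A is the whole type 'a (a ring_1); R is the type 'r
(comm_ring_1) acting through the structure map sc (central, degree 0).\<close>

definition sgnd :: "int \<Rightarrow> 'a::ring_1" where
  "sgnd n = (if even n then 1 else -1)"

definition graded_dg_algebra ::
  "('r::comm_ring_1 \<Rightarrow> 'a::ring_1) \<Rightarrow> (int \<Rightarrow> 'a set) \<Rightarrow> ('a \<Rightarrow> 'a) \<Rightarrow> bool" where
  "graded_dg_algebra sc gr d \<longleftrightarrow>
     (\<forall>r s. sc (r + s) = sc r + sc s \<and> sc (r * s) = sc r * sc s) \<and> sc 1 = 1 \<and>
     (\<forall>r a. sc r * a = a * sc r) \<and> (\<forall>r. sc r \<in> gr 0) \<and>
     (\<forall>n. 0 \<in> gr n \<and> (\<forall>x\<in>gr n. \<forall>y\<in>gr n. x + y \<in> gr n \<and> - x \<in> gr n)) \<and>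
     (\<forall>m n. \<forall>x\<in>gr m. \<forall>y\<in>gr n. x * y \<in> gr (m + n)) \<and> 1 \<in> gr 0 \<and>
     (\<forall>a. \<exists>!c. (\<forall>n. c n \<in> gr n) \<and> finite {n. c n \<noteq> 0} \<and> a = (\<Sum>n\<in>{n. c n \<noteq> 0}. c n)) \<and>
     (\<forall>a b. d (a + b) = d a + d b) \<and> (\<forall>r a. d (sc r * a) = sc r * d a) \<and>
     (\<forall>n. \<forall>x\<in>gr n. d x \<in> gr (n + 1)) \<and> (\<forall>a. d (d a) = 0) \<and>
     (\<forall>n. \<forall>a\<in>gr n. \<forall>b. d (a * b) = d a * b + sgnd n * a * d b)"

record ('a, 'm) dgmod =
  mcar :: "'m set"
  mzero :: 'm
  madd :: "'m \<Rightarrow> 'm \<Rightarrow> 'm"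
  mneg :: "'m \<Rightarrow> 'm"
  msmul :: "'a \<Rightarrow> 'm \<Rightarrow> 'm"
  mgr :: "int \<Rightarrow> 'm set"
  mdelta :: "'m \<Rightarrow> 'm"

definition msum :: "('a, 'm) dgmod \<Rightarrow> (int \<Rightarrow> 'm) \<Rightarrow> int set \<Rightarrow> 'm" where
  "msum M c S = foldr (\<lambda>n acc. madd M (c n) acc) (sorted_list_of_set S) (mzero M)"

definition dg_module :: "(int \<Rightarrow> 'a::ring_1 set) \<Rightarrow> ('a \<Rightarrow> 'a) \<Rightarrow> ('a, 'm) dgmod \<Rightarrow> bool" where
  "dg_module gr d M \<longleftrightarrow>
     mzero M \<in> mcar M \<and>
     (\<forall>x\<in>mcar M. \<forall>y\<in>mcar M. madd M x y \<in> mcar M) \<and> (\<forall>x\<in>mcar M. mneg M x \<in> mcar M) \<and>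
     (\<forall>x\<in>mcar M. \<forall>y\<in>mcar M. \<forall>z\<in>mcar M. madd M (madd M x y) z = madd M x (madd M y z)) \<and>
     (\<forall>x\<in>mcar M. \<forall>y\<in>mcar M. madd M x y = madd M y x) \<and>
     (\<forall>x\<in>mcar M. madd M (mzero M) x = x) \<and>
     (\<forall>x\<in>mcar M. madd M (mneg M x) x = mzero M) \<and>
     (\<forall>a. \<forall>x\<in>mcar M. msmul M a x \<in> mcar M) \<and>
     (\<forall>a b. \<forall>x\<in>mcar M. msmul M (a * b) x = msmul M a (msmul M b x)) \<and>
     (\<forall>x\<in>mcar M. msmul M 1 x = x) \<and>
     (\<forall>a b. \<forall>x\<in>mcar M. msmul M (a + b) x = madd M (msmul M a x) (msmul M b x)) \<and>
     (\<forall>a. \<forall>x\<in>mcar M. \<forall>y\<in>mcar M. msmul M a (madd M x y) = madd M (msmul M a x) (msmul M a y)) \<and>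
     (\<forall>n. mgr M n \<subseteq> mcar M \<and> mzero M \<in> mgr M n \<and>
          (\<forall>x\<in>mgr M n. \<forall>y\<in>mgr M n. madd M x y \<in> mgr M n \<and> mneg M x \<in> mgr M n)) \<and>
     (\<forall>p n. \<forall>a\<in>gr p. \<forall>x\<in>mgr M n. msmul M a x \<in> mgr M (p + n)) \<and>
     (\<forall>x\<in>mcar M. \<exists>!c. (\<forall>n. c n \<in> mgr M n) \<and> finite {n. c n \<noteq> mzero M} \<and>
                        x = msum M c {n. c n \<noteq> mzero M}) \<and>
     (\<forall>x\<in>mcar M. mdelta M x \<in> mcar M) \<and>
     (\<forall>x\<in>mcar M. \<forall>y\<in>mcar M. mdelta M (madd M x y) = madd M (mdelta M x) (mdelta M y)) \<and>
     (\<forall>n. \<forall>x\<in>mgr M n. mdelta M x \<in> mgr M (n + 1)) \<and>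
     (\<forall>x\<in>mcar M. mdelta M (mdelta M x) = mzero M) \<and>
     (\<forall>p. \<forall>a\<in>gr p. \<forall>x\<in>mcar M.
        mdelta M (msmul M a x) = madd M (msmul M (d a) x) (msmul M (sgnd p * a) (mdelta M x)))"

definition dg_submodule :: "(int \<Rightarrow> 'a::ring_1 set) \<Rightarrow> ('a, 'm) dgmod \<Rightarrow> 'm set \<Rightarrow> bool" where
  "dg_submodule gr M N \<longleftrightarrow>
     N \<subseteq> mcar M \<and> mzero M \<in> N \<and>
     (\<forall>x\<in>N. \<forall>y\<in>N. madd M x y \<in> N) \<and> (\<forall>x\<in>N. mneg M x \<in> N) \<and>
     (\<forall>a. \<forall>x\<in>N. msmul M a x \<in> N) \<and> (\<forall>x\<in>N. mdelta M x \<in> N) \<and>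
     (\<forall>x\<in>N. \<forall>c. ((\<forall>n. c n \<in> mgr M n) \<and> finite {n. c n \<noteq> mzero M} \<and>
                     x = msum M c {n. c n \<noteq> mzero M}) \<longrightarrow> (\<forall>n. c n \<in> N))"

definition dg_simple :: "(int \<Rightarrow> 'a::ring_1 set) \<Rightarrow> ('a \<Rightarrow> 'a) \<Rightarrow> ('a, 'm) dgmod \<Rightarrow> bool" where
  "dg_simple gr d M \<longleftrightarrow> dg_module gr d M \<and> mcar M \<noteq> {mzero M} \<and>
     (\<forall>N. dg_submodule gr M N \<longrightarrow> N = {mzero M} \<or> N = mcar M)"

definition ann :: "('a, 'm) dgmod \<Rightarrow> 'a set" where
  "ann M = {a. \<forall>x\<in>mcar M. msmul M a x = mzero M}"

text \<open>Universe of module elements used when quantifying over "all" dg-modules.\<close>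
type_synonym 'a muniv = "(nat \<Rightarrow> 'a) set"

definition dgrad :: "(int \<Rightarrow> 'a::ring_1 set) \<Rightarrow> ('a \<Rightarrow> 'a) \<Rightarrow> 'a set" where
  "dgrad gr d = \<Inter> {ann M | M :: ('a, 'a muniv) dgmod. dg_simple gr d M}"

definition regmod :: "(int \<Rightarrow> 'a::ring_1 set) \<Rightarrow> ('a \<Rightarrow> 'a) \<Rightarrow> ('a, 'a) dgmod" where
  "regmod gr d = \<lparr>mcar = UNIV, mzero = 0, madd = (+), mneg = uminus, msmul = (*),
                   mgr = gr, mdelta = d\<rparr>"

definition left_dg_ideal :: "(int \<Rightarrow> 'a::ring_1 set) \<Rightarrow> ('a \<Rightarrow> 'a) \<Rightarrow> 'a set \<Rightarrow> bool" where
  "left_dg_ideal gr d I \<longleftrightarrow> dg_submodule gr (regmod gr d) I"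

definition dg_artinian :: "(int \<Rightarrow> 'a::ring_1 set) \<Rightarrow> ('a \<Rightarrow> 'a) \<Rightarrow> bool" where
  "dg_artinian gr d \<longleftrightarrow> (\<forall>I :: nat \<Rightarrow> 'a set. (\<forall>n. left_dg_ideal gr d (I n) \<and> I (Suc n) \<subseteq> I n)
       \<longrightarrow> (\<exists>N. \<forall>n\<ge>N. I n = I N))"

definition dg_noetherian :: "(int \<Rightarrow> 'a::ring_1 set) \<Rightarrow> ('a \<Rightarrow> 'a) \<Rightarrow> bool" where
  "dg_noetherian gr d \<longleftrightarrow> (\<forall>I :: nat \<Rightarrow> 'a set. (\<forall>n. left_dg_ideal gr d (I n) \<and> I n \<subseteq> I (Suc n))
       \<longrightarrow> (\<exists>N. \<forall>n\<ge>N. I n = I N))"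

definition acyclic_dg :: "('a::ring_1 \<Rightarrow> 'a) \<Rightarrow> bool" where
  "acyclic_dg d \<longleftrightarrow> {a. d a = 0} = range d"

definition dg_hom :: "(int \<Rightarrow> 'a::ring_1 set) \<Rightarrow> ('a, 'm) dgmod \<Rightarrow> ('a, 'n) dgmod \<Rightarrow> ('m \<Rightarrow> 'n) \<Rightarrow> bool" where
  "dg_hom gr M N f \<longleftrightarrow>
     (\<forall>x\<in>mcar M. f x \<in> mcar N) \<and>
     (\<forall>x\<in>mcar M. \<forall>y\<in>mcar M. f (madd M x y) = madd N (f x) (f y)) \<and>
     (\<forall>a. \<forall>x\<in>mcar M. f (msmul M a x) = msmul N a (f x)) \<and>
     (\<forall>n. \<forall>x\<in>mgr M n. f x \<in> mgr N n) \<and>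
     (\<forall>x\<in>mcar M. f (mdelta M x) = mdelta N (f x))"

definition annihilated :: "'a set \<Rightarrow> ('a, 'm) dgmod \<Rightarrow> bool" where
  "annihilated J M \<longleftrightarrow> (\<forall>a\<in>J. \<forall>x\<in>mcar M. msmul M a x = mzero M)"

text \<open>Left dg-modules over A/J are the left dg-modules over A annihilated by J.
  (A/J, d-bar) is semisimple: every short exact sequence of such dg-modules splits.\<close>

definition dg_semisimple_quot :: "(int \<Rightarrow> 'a::ring_1 set) \<Rightarrow> ('a \<Rightarrow> 'a) \<Rightarrow> 'a set \<Rightarrow> bool" where
  "dg_semisimple_quot gr d J \<longleftrightarrow>
     (\<forall>(M1 :: ('a, 'a muniv) dgmod) (M2 :: ('a, 'a muniv) dgmod) (M3 :: ('a, 'a muniv) dgmod) f g.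
        dg_module gr d M1 \<and> dg_module gr d M2 \<and> dg_module gr d M3 \<and>
        annihilated J M1 \<and> annihilated J M2 \<and> annihilated J M3 \<and>
        dg_hom gr M1 M2 f \<and> dg_hom gr M2 M3 g \<and>
        inj_on f (mcar M1) \<and> g ` mcar M2 = mcar M3 \<and>
        f ` mcar M1 = {x\<in>mcar M2. g x = mzero M3}
        \<longrightarrow> (\<exists>s. dg_hom gr M3 M2 s \<and> (\<forall>x\<in>mcar M3. g (s x) = x)))"

text \<open>Homogeneous idempotents of A/J are classes of homogeneous a with a*a - a in J;
  they lift if they are the class of a homogeneous idempotent of A.\<close>

definition lift_idempotents :: "(int \<Rightarrow> 'a::ring_1 set) \<Rightarrow> 'a set \<Rightarrow> bool" where
  "lift_idempotents gr J \<longleftrightarrow>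
     (\<forall>n a. a \<in> gr n \<and> a * a - a \<in> J \<longrightarrow> (\<exists>m e. e \<in> gr m \<and> e * e = e \<and> e - a \<in> J))"

definition dg_semiprimary :: "(int \<Rightarrow> 'a::ring_1 set) \<Rightarrow> ('a \<Rightarrow> 'a) \<Rightarrow> bool" where
  "dg_semiprimary gr d \<longleftrightarrow>
     dg_semisimple_quot gr d (dgrad gr d) \<and> lift_idempotents gr (dgrad gr d)"

definition nilpotent_set :: "'a::ring_1 set \<Rightarrow> bool" where
  "nilpotent_set J \<longleftrightarrow> (\<exists>n. \<forall>xs. length xs = n \<and> set xs \<subseteq> J \<longrightarrow> prod_list xs = 0)"

end

theory Submission
  imports Defs "HOL-Library.Product_Plus" "HOL-Library.Set_Algebras"
begin

text \<open>Let \<open>J\<close> be the dg-radical. Semisimplicity of \<open>A/J\<close>, applied to short exact sequences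
  of dg-modules built as quotients of \<open>A \<oplus> A[1]\<close>, is used twice.

  First, for left dg-ideals \<open>P \<subseteq> N \<subseteq> Q\<close> with \<open>J Q \<subseteq> P\<close>, the ideal \<open>N\<close> has a
  complement in \<open>[P, Q]\<close>. Complements of an ascending chain can be chosen descending, so DCC
  gives ACC in \<open>[P, Q]\<close>. As \<open>J\<close> is nilpotent, the socle series
  \<open>0 = soc 0 \<subseteq> soc 1 \<subseteq> \<dots> \<subseteq> soc k = A\<close> with \<open>J soc (i + 1) \<subseteq> soc i\<close> is finite, and ACC
  on \<open>A\<close> follows layer by layer.

  Second, a section of \<open>0 \<rightarrow> A/J \<rightarrow> cone(id\<^bsub>A/J\<^esub>) \<rightarrow> (A/J)[1] \<rightarrow> 0\<close> gives \<open>h\<close> of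
  degree \<open>-1\<close> with \<open>j = 1 - d h \<in> J\<close>. Since \<open>j\<close> is a nilpotent cycle, \<open>d h = 1 - j\<close> has
  the cycle \<open>w = \<Sum>i<k. j^i\<close> as inverse, and \<open>d (h w) = 1\<close>; hence every cycle
  \<open>z = d (h w z)\<close> is a boundary.\<close>

lemma sgnd_simps [simp]:
  "sgnd (n + 1) = - (sgnd n :: 'a::ring_1)"
  "sgnd n * sgnd n = (1 :: 'a::ring_1)"
  "sgnd 0 = (1 :: 'a::ring_1)"
  "sgnd (- 1) = (- 1 :: 'a::ring_1)"
  by (auto simp: sgnd_def)

lemma sgnd_commute: "sgnd n * (a :: 'a::ring_1) = a * sgnd n"
  by (auto simp: sgnd_def)

lemma one_minus_mult_geometric_sum:
  fixes j :: "'a::ring_1"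
  shows "(1 - j) * (\<Sum>i<k. j ^ i) = 1 - j ^ k"
proof (induction k)
  case (Suc k)
  have "(1 - j) * (\<Sum>i<Suc k. j ^ i) = (1 - j ^ k) + (1 - j) * j ^ k"
    by (simp add: distrib_left Suc)
  also have "\<dots> = 1 - j ^ Suc k"
    by (simp add: algebra_simps power_Suc)
  finally show ?case .
qed simp

locale dg_algebra =
  fixes sc :: "'r::comm_ring_1 \<Rightarrow> 'a::ring_1" and gr :: "int \<Rightarrow> 'a set" and d :: "'a \<Rightarrow> 'a"
  assumes graded_dg_algebra: "graded_dg_algebra sc gr d"
begin

abbreviation homogeneous_decomposition :: "(int \<Rightarrow> 'a) \<Rightarrow> 'a \<Rightarrow> bool" where
  "homogeneous_decomposition c a \<equiv>
     (\<forall>n. c n \<in> gr n) \<and> finite {n. c n \<noteq> 0} \<and> a = (\<Sum>n\<in>{n. c n \<noteq> 0}. c n)"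

lemma
  shows gr_zero [simp]: "0 \<in> gr n"
    and gr_add: "x \<in> gr n \<Longrightarrow> y \<in> gr n \<Longrightarrow> x + y \<in> gr n"
    and gr_uminus: "x \<in> gr n \<Longrightarrow> - x \<in> gr n"
    and gr_mult: "x \<in> gr m \<Longrightarrow> y \<in> gr n \<Longrightarrow> x * y \<in> gr (m + n)"
    and gr_one: "1 \<in> gr 0"
    and d_add: "d (a + b) = d a + d b"
    and d_gr: "x \<in> gr n \<Longrightarrow> d x \<in> gr (n + 1)"
    and d_d [simp]: "d (d a) = 0"
    and d_mult: "x \<in> gr n \<Longrightarrow> d (x * b) = d x * b + sgnd n * x * d b"
    and homogeneous_decomposition_unique: "\<exists>!c. homogeneous_decomposition c a"
  using graded_dg_algebra by (simp_all add: graded_dg_algebra_def)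

lemma d_zero [simp]: "d 0 = 0"
  using d_add[of 0 0] by simp

lemma d_uminus: "d (- a) = - d a"
  using d_add[of a "- a"] by (simp add: eq_neg_iff_add_eq_0 add.commute)

lemma d_diff: "d (a - b) = d a - d b"
  using d_add[of a "- b"] d_uminus by simp

lemma d_sum: "d (sum f S) = (\<Sum>x\<in>S. d (f x))"
  by (induction S rule: infinite_finite_induct) (auto simp: d_add)

lemma d_one [simp]: "d 1 = 0"
  using d_mult[OF gr_one, of 1] by simp

lemma d_sgnd [simp]: "d (sgnd n) = 0"
  by (simp add: sgnd_def d_uminus)

lemma gr_diff: "x \<in> gr n \<Longrightarrow> y \<in> gr n \<Longrightarrow> x - y \<in> gr n"
  using gr_add gr_uminus by (metis diff_conv_add_uminus)

lemma gr_sum: "(\<And>i. i \<in> S \<Longrightarrow> f i \<in> gr n) \<Longrightarrow> sum f S \<in> gr n"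
  by (induction S rule: infinite_finite_induct) (auto intro: gr_add)

lemma sgnd_in_gr: "sgnd n \<in> gr 0"
  using gr_one gr_uminus by (auto simp: sgnd_def)

lemma sgnd_mult_in_gr: "x \<in> gr p \<Longrightarrow> sgnd n * x \<in> gr p"
  using gr_mult[OF sgnd_in_gr] by fastforce

lemma d_sgnd_mult: "d (sgnd n * x) = sgnd n * d x"
  using d_mult[OF sgnd_in_gr, of n x] by simp

lemma d_mult_cycle: "x \<in> gr n \<Longrightarrow> d b = 0 \<Longrightarrow> d (x * b) = d x * b"
  using d_mult by simp

section \<open>Homogeneous components\<close>

definition hcomp :: "int \<Rightarrow> 'a \<Rightarrow> 'a" where
  "hcomp n a = (THE c. homogeneous_decomposition c a) n"

definition hsupp :: "'a \<Rightarrow> int set" where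
  "hsupp a = {n. hcomp n a \<noteq> 0}"

lemma homogeneous_decomposition_hcomp: "homogeneous_decomposition (\<lambda>n. hcomp n a) a"
proof -
  have "(THE c. homogeneous_decomposition c a) = (\<lambda>n. hcomp n a)"
    unfolding hcomp_def by (rule ext) simp
  with theI'[OF homogeneous_decomposition_unique[of a]] show ?thesis
    by simp
qed

lemma hcomp_in_gr [simp, intro]: "hcomp n a \<in> gr n"
  using homogeneous_decomposition_hcomp by blast

lemma finite_hsupp [simp, intro]: "finite (hsupp a)"
  using homogeneous_decomposition_hcomp unfolding hsupp_def by blast

lemma hcomp_outside_hsupp: "n \<notin> hsupp a \<Longrightarrow> hcomp n a = 0"
  by (simp add: hsupp_def)

lemma sum_hcomp:
  assumes "finite F" "hsupp a \<subseteq> F"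
  shows "(\<Sum>n\<in>F. hcomp n a) = a"
proof -
  have "(\<Sum>n\<in>F. hcomp n a) = (\<Sum>n\<in>hsupp a. hcomp n a)"
    by (rule sum.mono_neutral_right[OF assms]) (simp add: hcomp_outside_hsupp)
  also have "\<dots> = a"
    using homogeneous_decomposition_hcomp[of a] unfolding hsupp_def by metis
  finally show ?thesis .
qed

lemma hcomp_unique:
  assumes c: "\<And>n. c n \<in> gr n" and F: "finite F" and vanish: "\<And>n. n \<notin> F \<Longrightarrow> c n = 0"
    and a: "a = (\<Sum>n\<in>F. c n)"
  shows "hcomp n a = c n"
proof -
  have sub: "{n. c n \<noteq> 0} \<subseteq> F" using vanish by blast
  have "(\<Sum>n\<in>F. c n) = (\<Sum>n\<in>{n. c n \<noteq> 0}. c n)"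
    by (rule sum.mono_neutral_right[OF F sub]) auto
  then have "homogeneous_decomposition c a"
    using c finite_subset[OF sub F] a by simp
  then have "(THE c. homogeneous_decomposition c a) = c"
    by (rule the1_equality[OF homogeneous_decomposition_unique])
  then show ?thesis
    unfolding hcomp_def by simp
qed

lemma hcomp_homogeneous: "x \<in> gr m \<Longrightarrow> hcomp n x = (if n = m then x else 0)"
  by (rule hcomp_unique[where F = "{m}"]) auto

lemma hcomp_zero [simp]: "hcomp n 0 = 0"
  using hcomp_homogeneous[of 0 0] by simp

lemma hcomp_add: "hcomp n (a + b) = hcomp n a + hcomp n b"
proof (rule hcomp_unique[where F = "hsupp a \<union> hsupp b"])
  show "a + b = (\<Sum>n\<in>hsupp a \<union> hsupp b. hcomp n a + hcomp n b)"
    by (simp add: sum.distrib sum_hcomp)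
qed (auto intro: gr_add simp: hcomp_outside_hsupp)

lemma hcomp_uminus: "hcomp n (- a) = - hcomp n a"
  using hcomp_add[of n a "- a"] by (metis add.right_inverse hcomp_zero minus_unique)

lemma hcomp_diff: "hcomp n (a - b) = hcomp n a - hcomp n b"
  using hcomp_add[of n a "- b"] hcomp_uminus by simp

lemma hcomp_eqI: "(\<And>n. hcomp n a = hcomp n b) \<Longrightarrow> a = b"
  using homogeneous_decomposition_hcomp[of a] homogeneous_decomposition_hcomp[of b] by simp

lemma hcomp_mult_left:
  assumes x: "x \<in> gr p"
  shows "hcomp r (x * b) = x * hcomp (r - p) b"
proof (rule hcomp_unique[where F = "(\<lambda>q. q + p) ` hsupp b"])
  show "x * hcomp (r' - p) b \<in> gr r'" for r'
    using gr_mult[OF x hcomp_in_gr[of "r' - p" b]] by simp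
  show "r' \<notin> (\<lambda>q. q + p) ` hsupp b \<Longrightarrow> x * hcomp (r' - p) b = 0" for r'
    by (auto simp: hsupp_def image_iff) (drule spec[of _ "r' - p"], simp)
  have "x * b = x * (\<Sum>q\<in>hsupp b. hcomp q b)"
    by (simp add: sum_hcomp)
  also have "\<dots> = (\<Sum>q\<in>hsupp b. x * hcomp q b)"
    by (rule sum_distrib_left)
  also have "\<dots> = (\<Sum>r'\<in>(\<lambda>q. q + p) ` hsupp b. x * hcomp (r' - p) b)"
    by (subst sum.reindex) (auto simp: inj_on_def)
  finally show "x * b = (\<Sum>r'\<in>(\<lambda>q. q + p) ` hsupp b. x * hcomp (r' - p) b)" .
qed simp

lemma hcomp_d: "hcomp r (d b) = d (hcomp (r - 1) b)"
proof (rule hcomp_unique[where F = "(\<lambda>q. q + 1) ` hsupp b"])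
  show "d (hcomp (r' - 1) b) \<in> gr r'" for r'
    using d_gr[OF hcomp_in_gr[of "r' - 1" b]] by simp
  show "r' \<notin> (\<lambda>q. q + 1) ` hsupp b \<Longrightarrow> d (hcomp (r' - 1) b) = 0" for r'
    by (auto simp: hsupp_def image_iff) (drule spec[of _ "r' - 1"], simp)
  have "d b = d (\<Sum>q\<in>hsupp b. hcomp q b)"
    by (simp add: sum_hcomp)
  also have "\<dots> = (\<Sum>q\<in>hsupp b. d (hcomp q b))"
    by (rule d_sum)
  also have "\<dots> = (\<Sum>r'\<in>(\<lambda>q. q + 1) ` hsupp b. d (hcomp (r' - 1) b))"
    by (subst sum.reindex) (auto simp: inj_on_def)
  finally show "d b = (\<Sum>r'\<in>(\<lambda>q. q + 1) ` hsupp b. d (hcomp (r' - 1) b))" .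
qed simp

definition twist :: "'a \<Rightarrow> 'a" where
  "twist y = (\<Sum>q\<in>hsupp y. sgnd q * hcomp q y)"

lemma hcomp_twist: "hcomp r (twist y) = sgnd r * hcomp r y"
  unfolding twist_def
  by (rule hcomp_unique[where F = "hsupp y"])
    (auto intro: sgnd_mult_in_gr simp: hcomp_outside_hsupp)

lemma twist_add: "twist (a + b) = twist a + twist b"
  by (rule hcomp_eqI) (simp add: hcomp_twist hcomp_add distrib_left)

lemma twist_zero [simp]: "twist 0 = 0"
  unfolding twist_def hsupp_def by simp

lemma twist_homogeneous: "y \<in> gr n \<Longrightarrow> twist y = sgnd n * y"
  by (rule hcomp_eqI) (simp add: hcomp_twist hcomp_homogeneous hcomp_mult_left[OF sgnd_in_gr])

lemma twist_in_gr: "y \<in> gr n \<Longrightarrow> twist y \<in> gr n"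
  using twist_homogeneous sgnd_mult_in_gr by simp

lemma twist_mult:
  assumes a: "a \<in> gr p"
  shows "twist (a * y) = sgnd p * a * twist y"
proof (rule hcomp_eqI)
  fix r
  have "hcomp r (twist (a * y)) = sgnd r * (a * hcomp (r - p) y)"
    by (simp add: hcomp_twist hcomp_mult_left[OF a])
  also have "\<dots> = sgnd p * a * (sgnd (r - p) * hcomp (r - p) y)"
    unfolding sgnd_def by (auto simp: even_diff)
  also have "\<dots> = hcomp r (sgnd p * a * twist y)"
    by (simp add: hcomp_mult_left[OF sgnd_mult_in_gr[OF a]] hcomp_twist)
  finally show "hcomp r (twist (a * y)) = hcomp r (sgnd p * a * twist y)" .
qed

lemma d_twist: "d (twist y) = - twist (d y)"
proof (rule hcomp_eqI)
  fix r
  have "hcomp r (d (twist y) + twist (d y)) =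
      sgnd (r - 1) * d (hcomp (r - 1) y) + sgnd r * d (hcomp (r - 1) y)"
    by (simp add: hcomp_twist hcomp_add hcomp_d d_sgnd_mult)
  also have "\<dots> = 0"
    unfolding sgnd_def by (auto simp: even_diff)
  finally show "hcomp r (d (twist y)) = hcomp r (- twist (d y))"
    by (simp add: hcomp_add hcomp_uminus eq_neg_iff_add_eq_0)
qed

end

section \<open>Dg-modules\<close>

lemma foldr_insort_left_commute:
  assumes left_commute: "\<And>x y z. x \<in> A \<Longrightarrow> y \<in> A \<Longrightarrow> z \<in> B \<Longrightarrow> F x (F y z) = F y (F x z)"
    and closed: "\<And>x z. x \<in> A \<Longrightarrow> z \<in> B \<Longrightarrow> F x z \<in> B"
    and "set xs \<subseteq> A" "a \<in> A" "z \<in> B"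
  shows "foldr F (insort a xs) z = F a (foldr F xs z)"
  using assms(3-)
proof (induction xs)
  case (Cons b xs)
  have "foldr F xs z \<in> B"
    using Cons.prems by (induction xs) (auto intro: closed)
  with Cons left_commute show ?case by auto
qed simp

lemma foldr_cong_set:
  "(\<And>n. n \<in> set xs \<Longrightarrow> c n = c' n) \<Longrightarrow> foldr (\<lambda>n. f (c n)) xs z = foldr (\<lambda>n. f (c' n)) xs z"
  by (induction xs) auto

lemma msum_cong: "(\<And>n. n \<in> S \<Longrightarrow> c n = c' n) \<Longrightarrow> msum M c S = msum M c' S"
  unfolding msum_def by (rule foldr_cong_set) (cases "finite S"; simp)

lemma msum_empty [simp]: "msum M c {} = mzero M"
  by (simp add: msum_def)

lemma msum_regmod: "msum (regmod gr d) c S = sum c S"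
proof (cases "finite S")
  case True
  have "foldr (\<lambda>n acc. c n + acc) xs 0 = sum_list (map c xs)" for xs
    by (induction xs) auto
  then have "msum (regmod gr d) c S = sum_list (map c (sorted_list_of_set S))"
    unfolding msum_def regmod_def by simp
  with True show ?thesis
    by (simp add: sum_list_distinct_conv_sum_set)
qed (simp add: msum_def regmod_def)

locale dg_mod = dg_algebra sc gr d for sc :: "'r::comm_ring_1 \<Rightarrow> 'a::ring_1" and gr d +
  fixes M :: "('a, 'm) dgmod"
  assumes dg_module: "dg_module gr d M"
begin

lemma
  shows mzero_in [simp]: "mzero M \<in> mcar M"
    and madd_in [simp]: "x \<in> mcar M \<Longrightarrow> y \<in> mcar M \<Longrightarrow> madd M x y \<in> mcar M"
    and mneg_in [simp]: "x \<in> mcar M \<Longrightarrow> mneg M x \<in> mcar M"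
    and msmul_in [simp]: "x \<in> mcar M \<Longrightarrow> msmul M a x \<in> mcar M"
    and msmul_mult: "x \<in> mcar M \<Longrightarrow> msmul M (a * b) x = msmul M a (msmul M b x)"
    and msmul_one [simp]: "x \<in> mcar M \<Longrightarrow> msmul M 1 x = x"
    and msmul_add_left: "x \<in> mcar M \<Longrightarrow> msmul M (a + b) x = madd M (msmul M a x) (msmul M b x)"
    and msmul_madd:
      "x \<in> mcar M \<Longrightarrow> y \<in> mcar M \<Longrightarrow> msmul M a (madd M x y) = madd M (msmul M a x) (msmul M a y)"
    and mgr_in: "x \<in> mgr M n \<Longrightarrow> x \<in> mcar M"
    and mzero_in_mgr [simp]: "mzero M \<in> mgr M n"
    and msmul_mgr: "a \<in> gr p \<Longrightarrow> x \<in> mgr M n \<Longrightarrow> msmul M a x \<in> mgr M (p + n)"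
    and mdelta_in [simp]: "x \<in> mcar M \<Longrightarrow> mdelta M x \<in> mcar M"
    and mdelta_madd:
      "x \<in> mcar M \<Longrightarrow> y \<in> mcar M \<Longrightarrow> mdelta M (madd M x y) = madd M (mdelta M x) (mdelta M y)"
    and mdelta_msmul: "a \<in> gr p \<Longrightarrow> x \<in> mcar M \<Longrightarrow>
      mdelta M (msmul M a x) = madd M (msmul M (d a) x) (msmul M (sgnd p * a) (mdelta M x))"
  using dg_module by (simp_all add: dg_module_def subset_iff)

lemma madd_assoc:
  "x \<in> mcar M \<Longrightarrow> y \<in> mcar M \<Longrightarrow> w \<in> mcar M \<Longrightarrow> madd M (madd M x y) w = madd M x (madd M y w)"
  using dg_module unfolding dg_module_def by (elim conjE) blast

lemma madd_commute: "x \<in> mcar M \<Longrightarrow> y \<in> mcar M \<Longrightarrow> madd M x y = madd M y x"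
  using dg_module unfolding dg_module_def by (elim conjE) blast

lemma madd_mzero_left [simp]: "x \<in> mcar M \<Longrightarrow> madd M (mzero M) x = x"
  using dg_module unfolding dg_module_def by (elim conjE) blast

lemma madd_mneg_left: "x \<in> mcar M \<Longrightarrow> madd M (mneg M x) x = mzero M"
  using dg_module unfolding dg_module_def by (elim conjE) blast

lemma mgr_decomposition:
  assumes "x \<in> mcar M"
  shows "\<exists>!c. (\<forall>n. c n \<in> mgr M n) \<and> finite {n. c n \<noteq> mzero M} \<and>
    x = msum M c {n. c n \<noteq> mzero M}"
proof -
  have "\<forall>x\<in>mcar M. \<exists>!c. (\<forall>n. c n \<in> mgr M n) \<and> finite {n. c n \<noteq> mzero M} \<and>
      x = msum M c {n. c n \<noteq> mzero M}"
    using dg_module unfolding dg_module_def by (elim conjE) assumption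
  then show ?thesis
    using assms by (rule bspec)
qed

lemma madd_mzero_right [simp]: "x \<in> mcar M \<Longrightarrow> madd M x (mzero M) = x"
  using madd_commute[of x "mzero M"] by simp

lemma madd_left_cancel:
  assumes "x \<in> mcar M" "y \<in> mcar M" "w \<in> mcar M" "madd M x y = madd M x w"
  shows "y = w"
proof -
  have "y = madd M (madd M (mneg M x) x) y" using assms by (simp add: madd_mneg_left)
  also have "\<dots> = madd M (mneg M x) (madd M x w)" using assms by (simp add: madd_assoc)
  also have "\<dots> = w" using assms by (simp add: madd_mneg_left flip: madd_assoc)
  finally show ?thesis .
qed

lemma madd_idem_eq_mzero: "x \<in> mcar M \<Longrightarrow> madd M x x = x \<Longrightarrow> x = mzero M"
  using madd_left_cancel[of x x "mzero M"] by simp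

lemma msmul_mzero [simp]: "msmul M a (mzero M) = mzero M"
  using madd_idem_eq_mzero[of "msmul M a (mzero M)"] msmul_madd[of "mzero M" "mzero M" a] by simp

lemma msmul_zero [simp]: "x \<in> mcar M \<Longrightarrow> msmul M 0 x = mzero M"
  using madd_idem_eq_mzero[of "msmul M 0 x"] msmul_add_left[of x 0 0] by simp

lemma mdelta_mzero [simp]: "mdelta M (mzero M) = mzero M"
  using madd_idem_eq_mzero[of "mdelta M (mzero M)"] mdelta_madd[of "mzero M" "mzero M"] by simp

lemma mneg_eq_msmul: "x \<in> mcar M \<Longrightarrow> mneg M x = msmul M (- 1) x"
  using madd_left_cancel[of x "mneg M x" "msmul M (- 1) x"] msmul_add_left[of x 1 "- 1"]
    madd_commute[of x "mneg M x"] madd_mneg_left[of x]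
  by simp

lemma msum_in:
  assumes "\<And>n. n \<in> S \<Longrightarrow> c n \<in> mcar M"
  shows "msum M c S \<in> mcar M"
proof -
  have "foldr (\<lambda>n. madd M (c n)) xs (mzero M) \<in> mcar M" if "set xs \<subseteq> S" for xs
    using that assms by (induction xs) auto
  then show ?thesis
    unfolding msum_def by (cases "finite S") auto
qed

lemma msum_insert:
  assumes S: "finite S" "a \<notin> S" and c: "\<And>n. n \<in> insert a S \<Longrightarrow> c n \<in> mcar M"
  shows "msum M c (insert a S) = madd M (c a) (msum M c S)"
proof -
  have "msum M c (insert a S) =
      foldr (\<lambda>n. madd M (c n)) (insort a (sorted_list_of_set S)) (mzero M)"
    unfolding msum_def using S by (simp add: sorted_list_of_set_insert)
  also have "\<dots> = madd M (c a) (foldr (\<lambda>n. madd M (c n)) (sorted_list_of_set S) (mzero M))"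
  proof (rule foldr_insort_left_commute[where A = "insert a S" and B = "mcar M"])
    show "madd M (c x) (madd M (c y) w) = madd M (c y) (madd M (c x) w)"
      if "x \<in> insert a S" "y \<in> insert a S" "w \<in> mcar M" for x y w
      using that c by (metis madd_assoc madd_commute)
  qed (use S c in auto)
  finally show ?thesis
    unfolding msum_def .
qed

lemma msum_mzero [simp]: "msum M (\<lambda>n. mzero M) S = mzero M"
proof -
  have "foldr (\<lambda>n. madd M (mzero M)) xs (mzero M) = mzero M" for xs
    by (induction xs) auto
  then show ?thesis
    unfolding msum_def .
qed

lemma msum_drop_mzero:
  assumes "finite S" "\<And>n. n \<in> S \<Longrightarrow> c n \<in> mcar M"
  shows "msum M c S = msum M c {n\<in>S. c n \<noteq> mzero M}"
  using assms
proof (induction S rule: finite_induct)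
  case (insert a S)
  have IH: "msum M c S = msum M c {n\<in>S. c n \<noteq> mzero M}"
    using insert by simp
  have ins: "msum M c (insert a S) = madd M (c a) (msum M c S)"
    using insert by (intro msum_insert) auto
  show ?case
  proof (cases "c a = mzero M")
    case True
    then have "{n\<in>insert a S. c n \<noteq> mzero M} = {n\<in>S. c n \<noteq> mzero M}" by auto
    moreover have "msum M c {n\<in>S. c n \<noteq> mzero M} \<in> mcar M"
      by (rule msum_in) (use insert.prems in auto)
    ultimately show ?thesis
      using True ins IH by simp
  next
    case False
    then have "{n\<in>insert a S. c n \<noteq> mzero M} = insert a {n\<in>S. c n \<noteq> mzero M}" by auto
    moreover have "msum M c (insert a {n\<in>S. c n \<noteq> mzero M}) =
        madd M (c a) (msum M c {n\<in>S. c n \<noteq> mzero M})"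
      by (rule msum_insert) (use insert in auto)
    ultimately show ?thesis
      using ins IH by simp
  qed
qed simp

lemma msum_reindex:
  assumes "finite S" "inj_on h S" "\<And>n. n \<in> h ` S \<Longrightarrow> c n \<in> mcar M"
  shows "msum M c (h ` S) = msum M (\<lambda>n. c (h n)) S"
  using assms
proof (induction S rule: finite_induct)
  case (insert a S)
  then have "h a \<notin> h ` S" by auto
  then have "msum M c (insert (h a) (h ` S)) = madd M (c (h a)) (msum M c (h ` S))"
    using insert by (intro msum_insert) auto
  moreover have "msum M (\<lambda>n. c (h n)) (insert a S) = madd M (c (h a)) (msum M (\<lambda>n. c (h n)) S)"
    using insert by (intro msum_insert) auto
  ultimately show ?case
    using insert by simp
qed simp

lemma msmul_msum:
  assumes "finite S" "\<And>n. n \<in> S \<Longrightarrow> c n \<in> mcar M"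
  shows "msmul M a (msum M c S) = msum M (\<lambda>n. msmul M a (c n)) S"
  using assms
proof (induction S rule: finite_induct)
  case (insert x S)
  have "msum M c (insert x S) = madd M (c x) (msum M c S)"
    using insert by (intro msum_insert) auto
  moreover have "msum M (\<lambda>n. msmul M a (c n)) (insert x S) =
      madd M (msmul M a (c x)) (msum M (\<lambda>n. msmul M a (c n)) S)"
    using insert by (intro msum_insert) auto
  ultimately show ?case
    using insert by (simp add: msmul_madd msum_in)
qed simp

lemma msmul_sum_left:
  assumes "finite S" "x \<in> mcar M"
  shows "msmul M (sum w S) x = msum M (\<lambda>n. msmul M (w n) x) S"
  using assms
proof (induction S rule: finite_induct)
  case (insert a S)
  have "msum M (\<lambda>n. msmul M (w n) x) (insert a S) =
      madd M (msmul M (w a) x) (msum M (\<lambda>n. msmul M (w n) x) S)"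
    using insert by (intro msum_insert) auto
  then show ?case
    using insert by (simp add: msmul_add_left)
qed simp

lemma msum_homogeneous_eqI:
  assumes eq: "msum M c F = msum M c' F'"
    and c: "\<And>n. c n \<in> mgr M n" "finite F" "\<And>n. n \<notin> F \<Longrightarrow> c n = mzero M"
    and c': "\<And>n. c' n \<in> mgr M n" "finite F'" "\<And>n. n \<notin> F' \<Longrightarrow> c' n = mzero M"
  shows "c = c'"
proof -
  have support: "{n\<in>F. c n \<noteq> mzero M} = {n. c n \<noteq> mzero M}"
    "{n\<in>F'. c' n \<noteq> mzero M} = {n. c' n \<noteq> mzero M}"
    using c(3) c'(3) by auto
  define x where "x = msum M c F"
  have "x = msum M c {n. c n \<noteq> mzero M}" "x = msum M c' {n. c' n \<noteq> mzero M}"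
    using msum_drop_mzero[OF c(2), of c] msum_drop_mzero[OF c'(2), of c'] c(1) c'(1) mgr_in eq
    unfolding x_def support by auto
  moreover have "x \<in> mcar M"
    unfolding x_def using c(1) mgr_in by (auto intro: msum_in)
  moreover have "finite {n. c n \<noteq> mzero M}" "finite {n. c' n \<noteq> mzero M}"
    using c(2) c'(2) support finite_subset by (metis (no_types, lifting) mem_Collect_eq subsetI)+
  ultimately show ?thesis
    using mgr_decomposition[of x] c(1) c'(1) by blast
qed

lemma ann_hcomp_mgr:
  assumes a: "a \<in> ann M" and x: "x \<in> mgr M m"
  shows "msmul M (hcomp n a) x = mzero M"
proof -
  have xc: "x \<in> mcar M" using x mgr_in by blast
  let ?e = "\<lambda>r. msmul M (hcomp (r - m) a) x"
  have "msum M ?e ((\<lambda>p. p + m) ` hsupp a) = msum M (\<lambda>p. msmul M (hcomp p a) x) (hsupp a)"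
    by (subst msum_reindex) (auto simp: inj_on_def xc)
  also have "\<dots> = msmul M a x"
    by (simp add: msmul_sum_left[OF finite_hsupp xc, symmetric] sum_hcomp)
  also have "\<dots> = msum M (\<lambda>_. mzero M) {}"
    using a xc unfolding ann_def by simp
  finally have "?e = (\<lambda>_. mzero M)"
  proof (rule msum_homogeneous_eqI)
    show "?e r \<in> mgr M r" for r
      using msmul_mgr[OF hcomp_in_gr x, of "r - m" a] by simp
    show "r \<notin> (\<lambda>p. p + m) ` hsupp a \<Longrightarrow> ?e r = mzero M" for r
      using xc hcomp_outside_hsupp[of "r - m" a] by force
  qed auto
  then show ?thesis
    by (metis add_diff_cancel)
qed

lemma ann_hcomp:
  assumes a: "a \<in> ann M"
  shows "hcomp n a \<in> ann M"
  unfolding ann_def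
proof (intro CollectI ballI)
  fix x assume "x \<in> mcar M"
  then obtain c where c: "\<forall>n. c n \<in> mgr M n" "finite {n. c n \<noteq> mzero M}"
    "x = msum M c {n. c n \<noteq> mzero M}"
    using mgr_decomposition by blast
  then have "msmul M (hcomp n a) x = msum M (\<lambda>m. msmul M (hcomp n a) (c m)) {n. c n \<noteq> mzero M}"
    using msmul_msum mgr_in by metis
  also have "\<dots> = msum M (\<lambda>m. mzero M) {n. c n \<noteq> mzero M}"
    by (rule msum_cong) (use ann_hcomp_mgr[OF a] c(1) in blast)
  finally show "msmul M (hcomp n a) x = mzero M"
    by simp
qed

lemma ann_add: "a \<in> ann M \<Longrightarrow> b \<in> ann M \<Longrightarrow> a + b \<in> ann M"
  unfolding ann_def by (auto simp: msmul_add_left)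

lemma ann_zero: "0 \<in> ann M"
  unfolding ann_def by auto

lemma ann_uminus: "a \<in> ann M \<Longrightarrow> - a \<in> ann M"
  unfolding ann_def by (auto simp: msmul_mult[of _ "- 1" a, simplified])

lemma ann_mult_left: "a \<in> ann M \<Longrightarrow> b * a \<in> ann M"
  unfolding ann_def by (auto simp: msmul_mult)

lemma ann_mult_right: "a \<in> ann M \<Longrightarrow> a * b \<in> ann M"
  unfolding ann_def by (auto simp: msmul_mult)

lemma ann_d_homogeneous:
  assumes a: "a \<in> ann M" "a \<in> gr p"
  shows "d a \<in> ann M"
  unfolding ann_def
proof (intro CollectI ballI)
  fix x assume x: "x \<in> mcar M"
  have "mzero M = mdelta M (msmul M a x)"
    using a x unfolding ann_def by simp
  also have "\<dots> = madd M (msmul M (d a) x) (msmul M (sgnd p * a) (mdelta M x))"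
    by (rule mdelta_msmul[OF a(2) x])
  also have "msmul M (sgnd p * a) (mdelta M x) = mzero M"
    using a x by (simp add: msmul_mult ann_def)
  finally show "msmul M (d a) x = mzero M"
    using x by simp
qed

end

lemma dg_hom_mzero:
  assumes "dg_mod sc gr d M" "dg_mod sc gr d N" "dg_hom gr M N f"
  shows "f (mzero M) = mzero N"
proof -
  interpret M: dg_mod sc gr d M by fact
  interpret N: dg_mod sc gr d N by fact
  have "madd N (f (mzero M)) (f (mzero M)) = f (mzero M)"
    using assms(3) M.madd_mzero_left[of "mzero M"] unfolding dg_hom_def by (metis M.mzero_in)
  then show ?thesis
    using N.madd_idem_eq_mzero assms(3) unfolding dg_hom_def by (metis M.mzero_in)
qed

lemma dg_hom_msum:
  assumes "dg_mod sc gr d M" "dg_mod sc gr d N" "dg_hom gr M N f"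
    and "finite S" "\<And>n. n \<in> S \<Longrightarrow> c n \<in> mcar M"
  shows "f (msum M c S) = msum N (\<lambda>n. f (c n)) S"
proof -
  interpret M: dg_mod sc gr d M by fact
  interpret N: dg_mod sc gr d N by fact
  have hom: "\<And>x y. x \<in> mcar M \<Longrightarrow> y \<in> mcar M \<Longrightarrow> f (madd M x y) = madd N (f x) (f y)"
    "\<And>x. x \<in> mcar M \<Longrightarrow> f x \<in> mcar N"
    using assms(3) unfolding dg_hom_def by blast+
  from assms(4,5) show ?thesis
  proof (induction S rule: finite_induct)
    case (insert a S)
    have "msum M c (insert a S) = madd M (c a) (msum M c S)"
      using insert by (intro M.msum_insert) auto
    moreover have "msum N (\<lambda>n. f (c n)) (insert a S) = madd N (f (c a)) (msum N (\<lambda>n. f (c n)) S)"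
      using insert hom by (intro N.msum_insert) auto
    ultimately show ?case
      using insert by (simp add: hom M.msum_in)
  qed (simp add: dg_hom_mzero[OF assms(1-3)])
qed

lemma dg_submodule_image:
  assumes "dg_mod sc gr d M" "dg_mod sc gr d N" and f: "dg_hom gr M N f"
  shows "dg_submodule gr N (f ` mcar M)"
proof -
  interpret M: dg_mod sc gr d M by fact
  interpret N: dg_mod sc gr d N by fact
  have f_in: "\<And>x. x \<in> mcar M \<Longrightarrow> f x \<in> mcar N"
    and f_add: "\<And>x y. x \<in> mcar M \<Longrightarrow> y \<in> mcar M \<Longrightarrow> f (madd M x y) = madd N (f x) (f y)"
    and f_smul: "\<And>a x. x \<in> mcar M \<Longrightarrow> f (msmul M a x) = msmul N a (f x)"
    and f_gr: "\<And>x n. x \<in> mgr M n \<Longrightarrow> f x \<in> mgr N n"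
    and f_delta: "\<And>x. x \<in> mcar M \<Longrightarrow> f (mdelta M x) = mdelta N (f x)"
    using f unfolding dg_hom_def by blast+
  have components: "c n \<in> f ` mcar M"
    if X: "X \<in> mcar M" and c: "\<forall>n. c n \<in> mgr N n" "finite {n. c n \<noteq> mzero N}"
      "f X = msum N c {n. c n \<noteq> mzero N}" for X c n
  proof -
    obtain e where e: "\<forall>n. e n \<in> mgr M n" "finite {n. e n \<noteq> mzero M}"
      "X = msum M e {n. e n \<noteq> mzero M}"
      using M.mgr_decomposition[OF X] by blast
    have e_in: "e n \<in> mcar M" for n using e(1) M.mgr_in by blast
    have "msum N (\<lambda>n. f (e n)) {n. e n \<noteq> mzero M} = msum N c {n. c n \<noteq> mzero N}"
      using dg_hom_msum[OF assms(1-3) e(2)] e(3) c(3) e_in by metis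
    then have "(\<lambda>n. f (e n)) = c"
    proof (rule N.msum_homogeneous_eqI)
      show "f (e n) \<in> mgr N n" for n using f_gr e(1) by blast
      show "n \<notin> {n. e n \<noteq> mzero M} \<Longrightarrow> f (e n) = mzero N" for n
        using dg_hom_mzero[OF assms(1-3)] by simp
    qed (use e(2) c in auto)
    then show ?thesis
      using e_in by blast
  qed
  show ?thesis
    unfolding dg_submodule_def
  proof (intro conjI ballI allI impI)
    show "f ` mcar M \<subseteq> mcar N" using f_in by blast
    show "mzero N \<in> f ` mcar M"
      by (rule rev_image_eqI[OF M.mzero_in]) (simp add: dg_hom_mzero[OF assms(1-3)])
    show "madd N x y \<in> f ` mcar M" if "x \<in> f ` mcar M" "y \<in> f ` mcar M" for x y
      using that by (auto simp flip: f_add)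
    show "msmul N a x \<in> f ` mcar M" if "x \<in> f ` mcar M" for a x
      using that by (auto simp flip: f_smul)
    then show "mneg N x \<in> f ` mcar M" if "x \<in> f ` mcar M" for x
      using that f_in N.mneg_eq_msmul by auto
    show "mdelta N x \<in> f ` mcar M" if "x \<in> f ` mcar M" for x
      using that by (auto simp flip: f_delta)
  qed (use components in blast)
qed

section \<open>The dg-radical and left dg-ideals\<close>

context dg_algebra
begin

abbreviation rad :: "'a set" where
  "rad \<equiv> dgrad gr d"

lemma rad_iff: "j \<in> rad \<longleftrightarrow> (\<forall>M :: ('a, 'a muniv) dgmod. dg_simple gr d M \<longrightarrow> j \<in> ann M)"
  unfolding dgrad_def by blast

lemma dg_mod_if_dg_simple: "dg_simple gr d M \<Longrightarrow> dg_mod sc gr d M"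
  unfolding dg_mod_def dg_mod_axioms_def dg_simple_def using dg_algebra_axioms by blast

lemma
  shows rad_zero: "0 \<in> rad"
    and rad_add: "a \<in> rad \<Longrightarrow> b \<in> rad \<Longrightarrow> a + b \<in> rad"
    and rad_uminus: "a \<in> rad \<Longrightarrow> - a \<in> rad"
    and rad_mult_left: "a \<in> rad \<Longrightarrow> b * a \<in> rad"
    and rad_mult_right: "a \<in> rad \<Longrightarrow> a * b \<in> rad"
    and rad_hcomp: "a \<in> rad \<Longrightarrow> hcomp n a \<in> rad"
    and rad_d_homogeneous: "a \<in> rad \<Longrightarrow> a \<in> gr p \<Longrightarrow> d a \<in> rad"
  unfolding rad_iff
  by (auto dest: dg_mod_if_dg_simple intro: dg_mod.ann_zero dg_mod.ann_add dg_mod.ann_uminus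
      dg_mod.ann_mult_left dg_mod.ann_mult_right dg_mod.ann_hcomp dg_mod.ann_d_homogeneous)

lemma rad_diff: "a \<in> rad \<Longrightarrow> b \<in> rad \<Longrightarrow> a - b \<in> rad"
  using rad_add rad_uminus by (metis diff_conv_add_uminus)

lemma rad_sum: "(\<And>i. i \<in> S \<Longrightarrow> f i \<in> rad) \<Longrightarrow> sum f S \<in> rad"
  by (induction S rule: infinite_finite_induct) (auto intro: rad_add rad_zero)

lemma rad_d:
  assumes "a \<in> rad"
  shows "d a \<in> rad"
proof -
  have "d a = (\<Sum>n\<in>hsupp a. d (hcomp n a))"
    using sum_hcomp[OF finite_hsupp subset_refl, of a] d_sum by metis
  also have "\<dots> \<in> rad"
    by (rule rad_sum) (use rad_d_homogeneous rad_hcomp[OF assms] hcomp_in_gr in blast)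
  finally show ?thesis .
qed

lemma rad_twist: "a \<in> rad \<Longrightarrow> twist a \<in> rad"
  unfolding twist_def by (rule rad_sum) (use rad_hcomp rad_mult_left in blast)

definition dg_ideal :: "'a set \<Rightarrow> bool" where
  "dg_ideal I \<longleftrightarrow> 0 \<in> I \<and> (\<forall>x\<in>I. \<forall>y\<in>I. x + y \<in> I) \<and> (\<forall>x\<in>I. - x \<in> I) \<and>
     (\<forall>a. \<forall>x\<in>I. a * x \<in> I) \<and> (\<forall>x\<in>I. d x \<in> I) \<and> (\<forall>x\<in>I. \<forall>n. hcomp n x \<in> I)"

lemma left_dg_ideal_iff: "left_dg_ideal gr d I \<longleftrightarrow> dg_ideal I"
proof -
  have "(\<forall>x\<in>I. \<forall>c. homogeneous_decomposition c x \<longrightarrow> (\<forall>n. c n \<in> I)) \<longleftrightarrow>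
      (\<forall>x\<in>I. \<forall>n. hcomp n x \<in> I)"
  proof
    assume "\<forall>x\<in>I. \<forall>c. homogeneous_decomposition c x \<longrightarrow> (\<forall>n. c n \<in> I)"
    then show "\<forall>x\<in>I. \<forall>n. hcomp n x \<in> I"
      using homogeneous_decomposition_hcomp by (blast dest: bspec spec[of _ "\<lambda>n. hcomp n _"])
  next
    assume hcomp: "\<forall>x\<in>I. \<forall>n. hcomp n x \<in> I"
    show "\<forall>x\<in>I. \<forall>c. homogeneous_decomposition c x \<longrightarrow> (\<forall>n. c n \<in> I)"
    proof (intro ballI allI impI)
      fix x c n assume "x \<in> I" and c: "homogeneous_decomposition c x"
      then have "hcomp n x = c n"
        by (intro hcomp_unique[where F = "{n. c n \<noteq> 0}"]) auto
      with hcomp \<open>x \<in> I\<close> show "c n \<in> I" by metis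
    qed
  qed
  then show ?thesis
    unfolding left_dg_ideal_def dg_submodule_def dg_ideal_def
    by (simp add: regmod_def msum_regmod[unfolded regmod_def])
qed

lemma
  assumes "dg_ideal I"
  shows dg_ideal_zero: "0 \<in> I"
    and dg_ideal_add: "x \<in> I \<Longrightarrow> y \<in> I \<Longrightarrow> x + y \<in> I"
    and dg_ideal_uminus: "x \<in> I \<Longrightarrow> - x \<in> I"
    and dg_ideal_mult: "x \<in> I \<Longrightarrow> a * x \<in> I"
    and dg_ideal_d: "x \<in> I \<Longrightarrow> d x \<in> I"
    and dg_ideal_hcomp: "x \<in> I \<Longrightarrow> hcomp n x \<in> I"
  using assms unfolding dg_ideal_def by blast+

lemma dg_ideal_diff: "dg_ideal I \<Longrightarrow> x \<in> I \<Longrightarrow> y \<in> I \<Longrightarrow> x - y \<in> I"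
  using dg_ideal_add dg_ideal_uminus by (metis diff_conv_add_uminus)

lemma dg_ideal_UNIV: "dg_ideal UNIV"
  unfolding dg_ideal_def by simp

lemma dg_ideal_Int: "dg_ideal A \<Longrightarrow> dg_ideal B \<Longrightarrow> dg_ideal (A \<inter> B)"
  unfolding dg_ideal_def by blast

lemma dg_ideal_plus:
  assumes A: "dg_ideal A" and B: "dg_ideal B"
  shows "dg_ideal (A + B)"
  unfolding dg_ideal_def
proof (intro conjI ballI allI)
  show "0 \<in> A + B"
    using set_plus_intro[OF dg_ideal_zero[OF A] dg_ideal_zero[OF B]] by simp
  fix x y assume "x \<in> A + B"
  then obtain a b where ab: "a \<in> A" "b \<in> B" "x = a + b"
    by (auto elim: set_plus_elim)
  have "- x = (- a) + (- b)"
    using ab by simp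
  then show "- x \<in> A + B"
    using ab A B by (metis set_plus_intro dg_ideal_uminus)
  show "c * x \<in> A + B" for c
    using ab A B by (simp add: distrib_left set_plus_intro dg_ideal_mult)
  show "d x \<in> A + B"
    using ab A B by (simp add: d_add set_plus_intro dg_ideal_d)
  show "hcomp n x \<in> A + B" for n
    using ab A B by (simp add: hcomp_add set_plus_intro dg_ideal_hcomp)
  assume "y \<in> A + B"
  then obtain a' b' where ab': "a' \<in> A" "b' \<in> B" "y = a' + b'"
    by (auto elim: set_plus_elim)
  have "x + y = (a + a') + (b + b')"
    using ab ab' by (simp add: algebra_simps)
  then show "x + y \<in> A + B"
    using A B ab ab' by (metis set_plus_intro dg_ideal_add)
qed

end

lemma zero_pair [simp]: "(0, 0) = (0 :: 'a::zero \<times> 'b::zero)"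
  by (simp add: zero_prod_def)

context dg_algebra
begin

section \<open>Subquotients of the cone\<close>

text \<open>A pair \<open>(x, y)\<close> of degree \<open>n\<close> has \<open>x \<in> A\<^sup>n\<close> and \<open>y \<in> A\<^sup>n\<^sup>+\<^sup>1\<close>, so pairs model
  \<open>A \<oplus> A[1]\<close>. With \<open>cone = True\<close> the differential is that of the cone of the identity
  of \<open>A\<close>, otherwise that of the direct sum.\<close>

definition pair_gr :: "int \<Rightarrow> ('a \<times> 'a) set" where
  "pair_gr n = gr n \<times> gr (n + 1)"

definition pair_hcomp :: "int \<Rightarrow> 'a \<times> 'a \<Rightarrow> 'a \<times> 'a" where
  "pair_hcomp n v = (hcomp n (fst v), hcomp (n + 1) (snd v))"

definition pair_hsupp :: "'a \<times> 'a \<Rightarrow> int set" where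
  "pair_hsupp v = hsupp (fst v) \<union> (\<lambda>q. q - 1) ` hsupp (snd v)"

definition pair_smult :: "'a \<Rightarrow> 'a \<times> 'a \<Rightarrow> 'a \<times> 'a" where
  "pair_smult a v = (a * fst v, a * snd v)"

definition pair_d :: "bool \<Rightarrow> 'a \<times> 'a \<Rightarrow> 'a \<times> 'a" where
  "pair_d cone v = (d (fst v) + (if cone then twist (snd v) else 0), d (snd v))"

lemma zero_in_pair_gr [simp]: "0 \<in> pair_gr n"
  by (simp add: pair_gr_def mem_Times_iff)

lemma pair_gr_add: "v \<in> pair_gr n \<Longrightarrow> w \<in> pair_gr n \<Longrightarrow> v + w \<in> pair_gr n"
  unfolding pair_gr_def by (auto simp: mem_Times_iff intro: gr_add)

lemma pair_gr_uminus: "v \<in> pair_gr n \<Longrightarrow> - v \<in> pair_gr n"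
  unfolding pair_gr_def by (auto simp: mem_Times_iff intro: gr_uminus)

lemma pair_hcomp_in_pair_gr: "pair_hcomp n v \<in> pair_gr n"
  unfolding pair_hcomp_def pair_gr_def by simp

lemma pair_hcomp_add: "pair_hcomp n (v + w) = pair_hcomp n v + pair_hcomp n w"
  unfolding pair_hcomp_def by (simp add: hcomp_add)

lemma pair_hcomp_diff: "pair_hcomp n (v - w) = pair_hcomp n v - pair_hcomp n w"
  unfolding pair_hcomp_def by (simp add: hcomp_diff)

lemma pair_hcomp_zero [simp]: "pair_hcomp n 0 = 0"
  unfolding pair_hcomp_def by simp

lemma pair_hcomp_sum: "pair_hcomp n (sum f S) = (\<Sum>i\<in>S. pair_hcomp n (f i))"
  by (induction S rule: infinite_finite_induct) (auto simp: pair_hcomp_add)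

lemma pair_hcomp_homogeneous: "w \<in> pair_gr m \<Longrightarrow> pair_hcomp n w = (if n = m then w else 0)"
  unfolding pair_hcomp_def pair_gr_def by (cases w) (auto simp: hcomp_homogeneous)

lemma finite_pair_hsupp [simp]: "finite (pair_hsupp v)"
  unfolding pair_hsupp_def by simp

lemma pair_hcomp_outside:
  assumes "n \<notin> pair_hsupp v"
  shows "pair_hcomp n v = 0"
proof -
  have "n \<notin> hsupp (fst v)" "n + 1 \<notin> hsupp (snd v)"
    using assms unfolding pair_hsupp_def by (auto simp: image_iff)
  then show ?thesis
    unfolding pair_hcomp_def by (simp add: hcomp_outside_hsupp)
qed

lemma sum_pair_hcomp:
  assumes F: "finite F" "pair_hsupp v \<subseteq> F"
  shows "(\<Sum>n\<in>F. pair_hcomp n v) = v"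
proof -
  have "(\<Sum>n\<in>F. hcomp (n + 1) (snd v)) = (\<Sum>m\<in>(\<lambda>n. n + 1) ` F. hcomp m (snd v))"
    by (subst sum.reindex) (auto simp: inj_on_def)
  also have "\<dots> = snd v"
  proof (rule sum_hcomp)
    show "hsupp (snd v) \<subseteq> (\<lambda>n. n + 1) ` F"
      using F(2) unfolding pair_hsupp_def by (force simp: image_iff)
  qed (use F in simp)
  finally have "(\<Sum>n\<in>F. hcomp (n + 1) (snd v)) = snd v" .
  moreover have "(\<Sum>n\<in>F. hcomp n (fst v)) = fst v"
    by (rule sum_hcomp) (use F in \<open>auto simp: pair_hsupp_def\<close>)
  ultimately show ?thesis
    unfolding pair_hcomp_def by (simp add: sum_prod prod_eq_iff)
qed

lemma pair_smult_in_pair_gr: "a \<in> gr p \<Longrightarrow> w \<in> pair_gr n \<Longrightarrow> pair_smult a w \<in> pair_gr (p + n)"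
  unfolding pair_smult_def pair_gr_def using gr_mult by (auto simp: add.assoc)

lemma pair_d_in_pair_gr:
  assumes "w \<in> pair_gr n"
  shows "pair_d cone w \<in> pair_gr (n + 1)"
proof -
  have w: "fst w \<in> gr n" "snd w \<in> gr (n + 1)"
    using assms unfolding pair_gr_def by auto
  have "d (fst w) + (if cone then twist (snd w) else 0) \<in> gr (n + 1)"
    using d_gr[OF w(1)] twist_in_gr[OF w(2)] by (simp add: gr_add)
  moreover have "d (snd w) \<in> gr (n + 1 + 1)"
    by (rule d_gr[OF w(2)])
  ultimately show ?thesis
    unfolding pair_d_def pair_gr_def by simp
qed

lemma pair_d_add: "pair_d cone (v + w) = pair_d cone v + pair_d cone w"
  unfolding pair_d_def by (simp add: d_add twist_add)

lemma pair_d_diff: "pair_d cone (v - w) = pair_d cone v - pair_d cone w"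
  using pair_d_add[of cone "v - w" w] by (simp add: eq_diff_eq)

lemma pair_d_pair_d [simp]: "pair_d cone (pair_d cone v) = 0"
  unfolding pair_d_def by (simp add: d_add d_twist)

lemma pair_d_pair_smult:
  assumes "a \<in> gr p"
  shows "pair_d cone (pair_smult a v) =
    pair_smult (d a) v + pair_smult (sgnd p * a) (pair_d cone v)"
  unfolding pair_d_def pair_smult_def using d_mult[OF assms] twist_mult[OF assms]
  by (simp add: distrib_left mult.assoc)

lemma pair_smult_add: "pair_smult a (v + w) = pair_smult a v + pair_smult a w"
  unfolding pair_smult_def by (simp add: distrib_left)

lemma pair_smult_diff: "pair_smult a (v - w) = pair_smult a v - pair_smult a w"
  unfolding pair_smult_def by (simp add: right_diff_distrib)

lemma pair_smult_mult: "pair_smult (a * b) v = pair_smult a (pair_smult b v)"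
  unfolding pair_smult_def by (simp add: mult.assoc)

lemma pair_smult_one [simp]: "pair_smult 1 v = v"
  unfolding pair_smult_def by simp

lemma pair_smult_add_left: "pair_smult (a + b) v = pair_smult a v + pair_smult b v"
  unfolding pair_smult_def by (simp add: distrib_right)

definition pair_submodule :: "('a \<times> 'a) set \<Rightarrow> bool \<Rightarrow> bool" where
  "pair_submodule S cone \<longleftrightarrow> 0 \<in> S \<and> (\<forall>v\<in>S. \<forall>w\<in>S. v + w \<in> S) \<and> (\<forall>v\<in>S. - v \<in> S) \<and>
     (\<forall>a. \<forall>v\<in>S. pair_smult a v \<in> S) \<and> (\<forall>v\<in>S. pair_d cone v \<in> S) \<and>
     (\<forall>v\<in>S. \<forall>n. pair_hcomp n v \<in> S)"

lemma
  assumes "pair_submodule S cone"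
  shows pair_submodule_zero: "0 \<in> S"
    and pair_submodule_add: "v \<in> S \<Longrightarrow> w \<in> S \<Longrightarrow> v + w \<in> S"
    and pair_submodule_uminus: "v \<in> S \<Longrightarrow> - v \<in> S"
    and pair_submodule_smult: "v \<in> S \<Longrightarrow> pair_smult a v \<in> S"
    and pair_submodule_d: "v \<in> S \<Longrightarrow> pair_d cone v \<in> S"
    and pair_submodule_hcomp: "v \<in> S \<Longrightarrow> pair_hcomp n v \<in> S"
  using assms unfolding pair_submodule_def by blast+

lemma pair_submodule_diff: "pair_submodule S cone \<Longrightarrow> v \<in> S \<Longrightarrow> w \<in> S \<Longrightarrow> v - w \<in> S"
  by (metis diff_conv_add_uminus pair_submodule_add pair_submodule_uminus)

lemma pair_submodule_sum:
  "pair_submodule S cone \<Longrightarrow> (\<And>i. i \<in> A \<Longrightarrow> f i \<in> S) \<Longrightarrow> sum f A \<in> S"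
  by (induction A rule: infinite_finite_induct) (auto intro: pair_submodule_zero pair_submodule_add)

lemma pair_submodule_UNIV: "pair_submodule UNIV cone"
  unfolding pair_submodule_def by simp

lemma pair_submodule_Times_zero: "dg_ideal I \<Longrightarrow> pair_submodule (I \<times> {0}) cone"
  unfolding pair_submodule_def dg_ideal_def pair_smult_def pair_d_def pair_hcomp_def
  by (auto simp: mem_Times_iff)

lemma dg_ideal_pair_fst:
  assumes S: "pair_submodule S False"
  shows "dg_ideal {x. (x, 0) \<in> S}"
  unfolding dg_ideal_def
proof (intro conjI ballI allI)
  show "0 \<in> {x. (x, 0) \<in> S}"
    using pair_submodule_zero[OF S] by simp
  fix x assume "x \<in> {x. (x, 0) \<in> S}"
  then have x: "(x, 0) \<in> S" by simp
  show "- x \<in> {x. (x, 0) \<in> S}"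
    using pair_submodule_uminus[OF S x] by simp
  show "a * x \<in> {x. (x, 0) \<in> S}" for a
    using pair_submodule_smult[OF S x, of a] by (simp add: pair_smult_def)
  show "d x \<in> {x. (x, 0) \<in> S}"
    using pair_submodule_d[OF S x] by (simp add: pair_d_def)
  show "hcomp n x \<in> {x. (x, 0) \<in> S}" for n
    using pair_submodule_hcomp[OF S x, of n] by (simp add: pair_hcomp_def)
  show "x + y \<in> {x. (x, 0) \<in> S}" if "y \<in> {x. (x, 0) \<in> S}" for y
    using pair_submodule_add[OF S x, of "(y, 0)"] that by simp
qed

text \<open>Semisimplicity of \<open>A/J\<close> only speaks about dg-modules whose elements live in
  \<^typ>\<open>'a muniv\<close>, so the coset \<open>v + P\<close> of a pair is encoded by the set of functions
  \<open>pair_code (v + p)\<close>, \<open>p \<in> P\<close>.\<close>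

definition pair_code :: "'a \<times> 'a \<Rightarrow> nat \<Rightarrow> 'a" where
  "pair_code v = (\<lambda>k. if k = 0 then fst v else snd v)"

lemma inj_pair_code: "inj pair_code"
proof (rule injI)
  fix v w assume "pair_code v = pair_code w"
  then have "pair_code v 0 = pair_code w 0" "pair_code v 1 = pair_code w 1" by auto
  then show "v = w" unfolding pair_code_def by (simp add: prod_eq_iff)
qed

definition coset :: "('a \<times> 'a) set \<Rightarrow> 'a \<times> 'a \<Rightarrow> 'a muniv" where
  "coset P v = pair_code ` ((\<lambda>p. v + p) ` P)"

definition coset_rep :: "('a \<times> 'a) set \<Rightarrow> ('a \<times> 'a) set \<Rightarrow> 'a muniv \<Rightarrow> 'a \<times> 'a" where
  "coset_rep P Q X = (SOME v. v \<in> Q \<and> coset P v = X)"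

lemma coset_eq_iff:
  assumes P: "pair_submodule P cone"
  shows "coset P v = coset P w \<longleftrightarrow> v - w \<in> P"
proof -
  have "coset P v = coset P w \<longleftrightarrow> (\<lambda>p. v + p) ` P = (\<lambda>p. w + p) ` P"
    unfolding coset_def by (rule inj_image_eq_iff[OF inj_pair_code])
  also have "\<dots> \<longleftrightarrow> v - w \<in> P"
  proof
    assume eq: "(\<lambda>p. v + p) ` P = (\<lambda>p. w + p) ` P"
    have "v + 0 \<in> (\<lambda>p. v + p) ` P"
      using pair_submodule_zero[OF P] by blast
    then obtain p where "p \<in> P" "v = w + p"
      using eq by auto
    then show "v - w \<in> P"
      by (simp add: add.commute)
  next
    assume vw: "v - w \<in> P"
    have shift: "(\<lambda>p. u + p) ` P \<subseteq> (\<lambda>p. u' + p) ` P" if "u - u' \<in> P" for u u'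
    proof
      fix x assume "x \<in> (\<lambda>p. u + p) ` P"
      then obtain p where "p \<in> P" "x = u' + ((u - u') + p)"
        by auto
      with that show "x \<in> (\<lambda>p. u' + p) ` P"
        using pair_submodule_add[OF P] by blast
    qed
    have "w - v \<in> P"
      using pair_submodule_uminus[OF P vw] by simp
    with vw shift show "(\<lambda>p. v + p) ` P = (\<lambda>p. w + p) ` P"
      by blast
  qed
  finally show ?thesis .
qed

lemma coset_rep_coset:
  "v \<in> Q \<Longrightarrow> coset_rep P Q (coset P v) \<in> Q \<and> coset P (coset_rep P Q (coset P v)) = coset P v"
  unfolding coset_rep_def by (rule someI[of "\<lambda>w. w \<in> Q \<and> coset P w = coset P v" v]) simp

definition qmod :: "('a \<times> 'a) set \<Rightarrow> ('a \<times> 'a) set \<Rightarrow> bool \<Rightarrow> ('a, 'a muniv) dgmod" where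
  "qmod P Q cone = \<lparr>mcar = coset P ` Q, mzero = coset P 0,
     madd = \<lambda>X Y. coset P (coset_rep P Q X + coset_rep P Q Y),
     mneg = \<lambda>X. coset P (- coset_rep P Q X),
     msmul = \<lambda>a X. coset P (pair_smult a (coset_rep P Q X)),
     mgr = \<lambda>n. coset P ` (Q \<inter> pair_gr n),
     mdelta = \<lambda>X. coset P (pair_d cone (coset_rep P Q X))\<rparr>"

definition qmap :: "('a \<times> 'a) set \<Rightarrow> ('a \<times> 'a) set \<Rightarrow> ('a \<times> 'a) set \<Rightarrow>
    ('a \<times> 'a \<Rightarrow> 'a \<times> 'a) \<Rightarrow> 'a muniv \<Rightarrow> 'a muniv" where
  "qmap P Q P' \<phi> X = coset P' (\<phi> (coset_rep P Q X))"

definition pair_morphism :: "('a \<times> 'a \<Rightarrow> 'a \<times> 'a) \<Rightarrow> bool \<Rightarrow> bool \<Rightarrow> bool" where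
  "pair_morphism \<phi> cone cone' \<longleftrightarrow> (\<forall>v w. \<phi> (v + w) = \<phi> v + \<phi> w) \<and>
     (\<forall>a v. \<phi> (pair_smult a v) = pair_smult a (\<phi> v)) \<and>
     (\<forall>v. \<phi> (pair_d cone v) = pair_d cone' (\<phi> v)) \<and> (\<forall>n. \<forall>v\<in>pair_gr n. \<phi> v \<in> pair_gr n)"

lemma pair_morphism_id: "pair_morphism id cone cone"
  unfolding pair_morphism_def by simp

lemma pair_morphism_diff: "pair_morphism \<phi> cone cone' \<Longrightarrow> \<phi> (v - w) = \<phi> v - \<phi> w"
  unfolding pair_morphism_def by (metis add_diff_cancel diff_add_cancel)

end

locale pair_quotient = dg_algebra sc gr d for sc :: "'r::comm_ring_1 \<Rightarrow> 'a::ring_1" and gr d +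
  fixes P Q :: "('a \<times> 'a) set" and cone :: bool
  assumes submodule_P: "pair_submodule P cone" and submodule_Q: "pair_submodule Q cone"
begin

abbreviation QM :: "('a, 'a muniv) dgmod" where
  "QM \<equiv> qmod P Q cone"

lemma same_coset_iff: "coset P v = coset P w \<longleftrightarrow> v - w \<in> P"
  by (rule coset_eq_iff[OF submodule_P])

lemma coset_rep_diff: "v \<in> Q \<Longrightarrow> coset_rep P Q (coset P v) - v \<in> P"
  using coset_rep_coset[of v Q P] same_coset_iff by blast

lemma coset_eq_zero_iff: "coset P v = coset P 0 \<longleftrightarrow> v \<in> P"
  by (simp add: same_coset_iff)

lemma qmod_simps:
  "mcar QM = coset P ` Q" "mzero QM = coset P 0" "mgr QM n = coset P ` (Q \<inter> pair_gr n)"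
  unfolding qmod_def by simp_all

lemma qmod_madd: "v \<in> Q \<Longrightarrow> w \<in> Q \<Longrightarrow> madd QM (coset P v) (coset P w) = coset P (v + w)"
  using pair_submodule_add[OF submodule_P, OF coset_rep_diff coset_rep_diff, of v w]
  unfolding qmod_def by (simp add: same_coset_iff algebra_simps)

lemma qmod_mneg: "v \<in> Q \<Longrightarrow> mneg QM (coset P v) = coset P (- v)"
  using pair_submodule_uminus[OF submodule_P, OF coset_rep_diff, of v]
  unfolding qmod_def by (simp add: same_coset_iff algebra_simps)

lemma qmod_msmul: "v \<in> Q \<Longrightarrow> msmul QM a (coset P v) = coset P (pair_smult a v)"
  using pair_submodule_smult[OF submodule_P, OF coset_rep_diff, of v]
  unfolding qmod_def by (simp add: same_coset_iff pair_smult_diff)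

lemma qmod_mdelta: "v \<in> Q \<Longrightarrow> mdelta QM (coset P v) = coset P (pair_d cone v)"
  using pair_submodule_d[OF submodule_P, OF coset_rep_diff, of v]
  unfolding qmod_def by (simp add: same_coset_iff pair_d_diff)

lemma msum_qmod:
  assumes "finite S" "\<And>n. n \<in> S \<Longrightarrow> r n \<in> Q"
  shows "msum QM (\<lambda>n. coset P (r n)) S = coset P (sum r S)"
proof -
  have "foldr (\<lambda>n. madd QM (coset P (r n))) xs (coset P 0) = coset P (sum_list (map r xs)) \<and>
      sum_list (map r xs) \<in> Q" if "set xs \<subseteq> S" for xs
    using that assms(2)
    by (induction xs) (auto simp: qmod_madd pair_submodule_zero[OF submodule_Q]
        pair_submodule_add[OF submodule_Q])
  then have "msum QM (\<lambda>n. coset P (r n)) S = coset P (sum_list (map r (sorted_list_of_set S)))"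
    unfolding msum_def qmod_simps using assms(1) by simp
  then show ?thesis
    using assms(1) by (simp add: sum_list_distinct_conv_sum_set)
qed

lemma coset_decomposition:
  assumes v: "v \<in> Q"
  defines "c \<equiv> \<lambda>n. coset P (pair_hcomp n v)"
  shows "(\<forall>n. c n \<in> mgr QM n) \<and> finite {n. c n \<noteq> mzero QM} \<and>
    coset P v = msum QM c {n. c n \<noteq> mzero QM}"
proof (intro conjI allI)
  have sub: "{n. c n \<noteq> mzero QM} \<subseteq> pair_hsupp v"
  proof
    fix n assume "n \<in> {n. c n \<noteq> mzero QM}"
    then have "pair_hcomp n v \<noteq> 0"
      unfolding c_def qmod_simps by auto
    then show "n \<in> pair_hsupp v"
      using pair_hcomp_outside by blast
  qed
  show "c n \<in> mgr QM n" for n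
    using pair_submodule_hcomp[OF submodule_Q v] pair_hcomp_in_pair_gr
    unfolding c_def qmod_simps by blast
  show fin: "finite {n. c n \<noteq> mzero QM}"
    using finite_subset[OF sub] by simp
  have "v - (\<Sum>n\<in>{n. c n \<noteq> mzero QM}. pair_hcomp n v) =
      (\<Sum>n\<in>pair_hsupp v - {n. c n \<noteq> mzero QM}. pair_hcomp n v)"
    using sum_pair_hcomp[OF finite_pair_hsupp subset_refl, of v]
      sum_diff[OF finite_pair_hsupp sub, of "\<lambda>n. pair_hcomp n v"] by simp
  also have "\<dots> \<in> P"
    by (rule pair_submodule_sum[OF submodule_P]) (simp add: c_def qmod_simps coset_eq_zero_iff)
  finally have "coset P v = coset P (\<Sum>n\<in>{n. c n \<noteq> mzero QM}. pair_hcomp n v)"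
    by (simp add: same_coset_iff)
  also have "\<dots> = msum QM c {n. c n \<noteq> mzero QM}"
    unfolding c_def
    by (rule msum_qmod[symmetric])
      (use fin[unfolded c_def] pair_submodule_hcomp[OF submodule_Q v] in auto)
  finally show "coset P v = msum QM c {n. c n \<noteq> mzero QM}" .
qed

lemma coset_decomposition_unique:
  assumes v: "v \<in> Q"
    and c: "\<forall>n. c n \<in> mgr QM n" "finite {n. c n \<noteq> mzero QM}"
      "coset P v = msum QM c {n. c n \<noteq> mzero QM}"
  shows "c = (\<lambda>n. coset P (pair_hcomp n v))"
proof
  fix m
  define S where "S = {n. c n \<noteq> mzero QM}"
  have "\<forall>n. \<exists>w. w \<in> Q \<inter> pair_gr n \<and> coset P w = c n"
    using c(1) unfolding qmod_simps by blast
  then obtain r where r: "\<And>n. r n \<in> Q \<inter> pair_gr n" "\<And>n. coset P (r n) = c n"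
    by metis
  have "msum QM c S = msum QM (\<lambda>n. coset P (r n)) S"
    by (rule msum_cong) (simp add: r(2))
  also have "\<dots> = coset P (sum r S)"
    by (rule msum_qmod) (use c(2) r(1) in \<open>auto simp: S_def\<close>)
  finally have "coset P v = coset P (sum r S)"
    using c(3) unfolding S_def by simp
  then have "pair_hcomp m (v - sum r S) \<in> P"
    by (simp add: same_coset_iff pair_submodule_hcomp[OF submodule_P])
  moreover have "(\<Sum>n\<in>S. pair_hcomp m (r n)) = (\<Sum>n\<in>S. if m = n then r n else 0)"
    by (rule sum.cong) (use r(1) pair_hcomp_homogeneous in auto)
  ultimately have diff: "pair_hcomp m v - (if m \<in> S then r m else 0) \<in> P"
    using c(2) by (simp add: pair_hcomp_diff pair_hcomp_sum sum.delta S_def)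
  show "c m = coset P (pair_hcomp m v)"
  proof (cases "m \<in> S")
    case True
    then have "coset P (pair_hcomp m v) = coset P (r m)"
      using diff by (simp add: same_coset_iff)
    then show ?thesis
      using r(2) by simp
  next
    case False
    then have "coset P (pair_hcomp m v) = coset P 0"
      using diff by (simp add: same_coset_iff)
    then show ?thesis
      using False by (simp add: S_def qmod_simps)
  qed
qed

lemma coset_in_qmod: "v \<in> Q \<Longrightarrow> coset P v \<in> coset P ` Q"
  by blast

lemma coset_in_mgr: "v \<in> Q \<Longrightarrow> v \<in> pair_gr n \<Longrightarrow> coset P v \<in> mgr QM n"
  unfolding qmod_simps by blast

lemma mgr_qmodE:
  assumes "X \<in> mgr QM n"
  obtains v where "v \<in> Q" "v \<in> pair_gr n" "X = coset P v"
  using assms unfolding qmod_simps by blast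

lemma dg_module_qmod: "dg_module gr d QM"
  unfolding dg_module_def qmod_simps(1,2)
proof (intro conjI)
  note Q = pair_submodule_zero[OF submodule_Q] pair_submodule_add[OF submodule_Q]
    pair_submodule_uminus[OF submodule_Q] pair_submodule_smult[OF submodule_Q]
    pair_submodule_d[OF submodule_Q]
  show "coset P 0 \<in> coset P ` Q"
    using Q by blast
  show "\<forall>x\<in>coset P ` Q. \<forall>y\<in>coset P ` Q. madd QM x y \<in> coset P ` Q"
    by (auto simp: qmod_madd intro!: coset_in_qmod Q)
  show "\<forall>x\<in>coset P ` Q. mneg QM x \<in> coset P ` Q"
    by (auto simp: qmod_mneg intro!: coset_in_qmod Q)
  show "\<forall>x\<in>coset P ` Q. \<forall>y\<in>coset P ` Q. \<forall>z\<in>coset P ` Q.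
      madd QM (madd QM x y) z = madd QM x (madd QM y z)"
    by (auto simp: qmod_madd Q add.assoc)
  show "\<forall>x\<in>coset P ` Q. \<forall>y\<in>coset P ` Q. madd QM x y = madd QM y x"
    by (auto simp: qmod_madd add.commute)
  show "\<forall>x\<in>coset P ` Q. madd QM (coset P 0) x = x"
    by (auto simp: qmod_madd Q)
  show "\<forall>x\<in>coset P ` Q. madd QM (mneg QM x) x = coset P 0"
    by (auto simp: qmod_madd qmod_mneg Q)
  show "\<forall>a. \<forall>x\<in>coset P ` Q. msmul QM a x \<in> coset P ` Q"
    by (auto simp: qmod_msmul intro!: coset_in_qmod Q)
  show "\<forall>a b. \<forall>x\<in>coset P ` Q. msmul QM (a * b) x = msmul QM a (msmul QM b x)"
    by (auto simp: qmod_msmul Q pair_smult_mult)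
  show "\<forall>x\<in>coset P ` Q. msmul QM 1 x = x"
    by (auto simp: qmod_msmul)
  show "\<forall>a b. \<forall>x\<in>coset P ` Q. msmul QM (a + b) x = madd QM (msmul QM a x) (msmul QM b x)"
    by (auto simp: qmod_msmul qmod_madd Q pair_smult_add_left)
  show "\<forall>a. \<forall>x\<in>coset P ` Q. \<forall>y\<in>coset P ` Q.
      msmul QM a (madd QM x y) = madd QM (msmul QM a x) (msmul QM a y)"
    by (auto simp: qmod_msmul qmod_madd Q pair_smult_add)
  show "\<forall>n. mgr QM n \<subseteq> coset P ` Q \<and> coset P 0 \<in> mgr QM n \<and>
      (\<forall>x\<in>mgr QM n. \<forall>y\<in>mgr QM n. madd QM x y \<in> mgr QM n \<and> mneg QM x \<in> mgr QM n)"
  proof (intro allI conjI ballI)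
    fix n
    show "mgr QM n \<subseteq> coset P ` Q"
      unfolding qmod_simps by blast
    show "coset P 0 \<in> mgr QM n"
      unfolding qmod_simps by (rule imageI) (simp add: Q(1))
    fix x y assume "x \<in> mgr QM n" "y \<in> mgr QM n"
    then obtain v w where vw: "v \<in> Q \<inter> pair_gr n" "w \<in> Q \<inter> pair_gr n"
      "x = coset P v" "y = coset P w"
      unfolding qmod_simps by blast
    then have "v + w \<in> Q \<inter> pair_gr n" "- v \<in> Q \<inter> pair_gr n"
      using Q pair_gr_add pair_gr_uminus by auto
    then show "madd QM x y \<in> mgr QM n" "mneg QM x \<in> mgr QM n"
      unfolding qmod_simps using vw by (auto simp: qmod_madd qmod_mneg)
  qed
  show "\<forall>p n. \<forall>a\<in>gr p. \<forall>x\<in>mgr QM n. msmul QM a x \<in> mgr QM (p + n)"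
  proof (intro allI ballI)
    fix p n a X assume a: "a \<in> gr p" and X: "X \<in> mgr QM n"
    from X obtain v where v: "v \<in> Q" "v \<in> pair_gr n" "X = coset P v"
      by (rule mgr_qmodE)
    then show "msmul QM a X \<in> mgr QM (p + n)"
      using coset_in_mgr[OF Q(4)[OF v(1)] pair_smult_in_pair_gr[OF a v(2)]]
      by (simp add: qmod_msmul)
  qed
  show "\<forall>x\<in>coset P ` Q. \<exists>!c. (\<forall>n. c n \<in> mgr QM n) \<and> finite {n. c n \<noteq> coset P 0} \<and>
      x = msum QM c {n. c n \<noteq> coset P 0}"
  proof
    fix x assume "x \<in> coset P ` Q"
    then obtain v where v: "v \<in> Q" "x = coset P v"
      by blast
    show "\<exists>!c. (\<forall>n. c n \<in> mgr QM n) \<and> finite {n. c n \<noteq> coset P 0} \<and>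
        x = msum QM c {n. c n \<noteq> coset P 0}"
      unfolding v(2)
      by (rule ex1I, rule coset_decomposition[OF v(1), unfolded qmod_simps(2)])
        (rule coset_decomposition_unique[OF v(1), unfolded qmod_simps(2)], blast+)
  qed
  show "\<forall>x\<in>coset P ` Q. mdelta QM x \<in> coset P ` Q"
    by (auto simp: qmod_mdelta intro!: coset_in_qmod Q)
  show "\<forall>x\<in>coset P ` Q. \<forall>y\<in>coset P ` Q.
      mdelta QM (madd QM x y) = madd QM (mdelta QM x) (mdelta QM y)"
    by (auto simp: qmod_mdelta qmod_madd Q pair_d_add)
  show "\<forall>n. \<forall>x\<in>mgr QM n. mdelta QM x \<in> mgr QM (n + 1)"
  proof (intro allI ballI)
    fix n X assume "X \<in> mgr QM n"
    then obtain v where v: "v \<in> Q" "v \<in> pair_gr n" "X = coset P v"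
      by (rule mgr_qmodE)
    then show "mdelta QM X \<in> mgr QM (n + 1)"
      using coset_in_mgr[OF Q(5)[OF v(1)] pair_d_in_pair_gr[OF v(2)]] by (simp add: qmod_mdelta)
  qed
  show "\<forall>x\<in>coset P ` Q. mdelta QM (mdelta QM x) = coset P 0"
    by (auto simp: qmod_mdelta Q)
  show "\<forall>p. \<forall>a\<in>gr p. \<forall>x\<in>coset P ` Q. mdelta QM (msmul QM a x) =
      madd QM (msmul QM (d a) x) (msmul QM (sgnd p * a) (mdelta QM x))"
    by (auto simp: qmod_mdelta qmod_msmul qmod_madd Q pair_d_pair_smult)
qed

sublocale dg_mod sc gr d QM
  by unfold_locales (rule dg_module_qmod)

lemma annihilated_qmod:
  "(\<And>j v. j \<in> J \<Longrightarrow> v \<in> Q \<Longrightarrow> pair_smult j v \<in> P) \<Longrightarrow> annihilated J QM"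
  unfolding annihilated_def qmod_simps by (auto simp: qmod_msmul same_coset_iff)

lemma pair_submodule_coset_preimage:
  assumes S: "dg_submodule gr QM S"
  shows "pair_submodule {v \<in> Q. coset P v \<in> S} cone"
  unfolding pair_submodule_def
proof (intro conjI ballI allI)
  have S_ops: "mzero QM \<in> S" "\<And>X Y. X \<in> S \<Longrightarrow> Y \<in> S \<Longrightarrow> madd QM X Y \<in> S"
    "\<And>X. X \<in> S \<Longrightarrow> mneg QM X \<in> S" "\<And>a X. X \<in> S \<Longrightarrow> msmul QM a X \<in> S"
    "\<And>X. X \<in> S \<Longrightarrow> mdelta QM X \<in> S"
    using S unfolding dg_submodule_def by blast+
  show "0 \<in> {v \<in> Q. coset P v \<in> S}"
    using S_ops(1) pair_submodule_zero[OF submodule_Q] by (simp add: qmod_simps)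
  fix v assume v: "v \<in> {v \<in> Q. coset P v \<in> S}"
  then have v_Q: "v \<in> Q" and v_S: "coset P v \<in> S"
    by auto
  show "- v \<in> {v \<in> Q. coset P v \<in> S}"
    using S_ops(3)[OF v_S] v_Q pair_submodule_uminus[OF submodule_Q] by (simp add: qmod_mneg)
  show "pair_smult a v \<in> {v \<in> Q. coset P v \<in> S}" for a
    using S_ops(4)[OF v_S] v_Q pair_submodule_smult[OF submodule_Q] by (simp add: qmod_msmul)
  show "pair_d cone v \<in> {v \<in> Q. coset P v \<in> S}"
    using S_ops(5)[OF v_S] v_Q pair_submodule_d[OF submodule_Q] by (simp add: qmod_mdelta)
  show "v + w \<in> {v \<in> Q. coset P v \<in> S}" if "w \<in> {v \<in> Q. coset P v \<in> S}" for w
  proof -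
    from that have w: "w \<in> Q" "coset P w \<in> S"
      by auto
    have "madd QM (coset P v) (coset P w) \<in> S"
      using S_ops(2)[OF v_S w(2)] .
    then show ?thesis
      using qmod_madd[OF v_Q w(1)] pair_submodule_add[OF submodule_Q v_Q w(1)] by simp
  qed
  have "\<forall>c. (\<forall>n. c n \<in> mgr QM n) \<and> finite {n. c n \<noteq> mzero QM} \<and>
      coset P v = msum QM c {n. c n \<noteq> mzero QM} \<longrightarrow> (\<forall>n. c n \<in> S)"
    using S v_S unfolding dg_submodule_def by blast
  from spec[OF this, of "\<lambda>n. coset P (pair_hcomp n v)"]
  show "pair_hcomp n v \<in> {v \<in> Q. coset P v \<in> S}" for n
    using coset_decomposition[OF v_Q] pair_submodule_hcomp[OF submodule_Q v_Q] by auto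
qed

end

context dg_algebra
begin

section \<open>Splitting exact sequences of quotients\<close>

lemma qmap_coset:
  assumes "pair_quotient sc gr d P Q cone" "pair_submodule P' cone'"
    and \<phi>: "pair_morphism \<phi> cone cone'" "\<phi> ` P \<subseteq> P'" and v: "v \<in> Q"
  shows "qmap P Q P' \<phi> (coset P v) = coset P' (\<phi> v)"
proof -
  interpret pair_quotient sc gr d P Q cone by fact
  have "\<phi> (coset_rep P Q (coset P v)) - \<phi> v \<in> P'"
    using pair_morphism_diff[OF \<phi>(1)] coset_rep_diff[OF v] \<phi>(2) by (metis image_subset_iff)
  then show ?thesis
    unfolding qmap_def using coset_eq_iff[OF assms(2)] by blast
qed

lemma dg_hom_qmap:
  assumes A: "pair_quotient sc gr d P Q cone" and B: "pair_quotient sc gr d P' Q' cone'"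
    and \<phi>: "pair_morphism \<phi> cone cone'" "\<phi> ` P \<subseteq> P'" "\<phi> ` Q \<subseteq> Q'"
  shows "dg_hom gr (qmod P Q cone) (qmod P' Q' cone') (qmap P Q P' \<phi>)"
proof -
  interpret A: pair_quotient sc gr d P Q cone by fact
  interpret B: pair_quotient sc gr d P' Q' cone' by fact
  have map: "qmap P Q P' \<phi> (coset P v) = coset P' (\<phi> v)" if "v \<in> Q" for v
    using qmap_coset[OF A B.submodule_P \<phi>(1,2) that] .
  have \<phi>_Q: "v \<in> Q \<Longrightarrow> \<phi> v \<in> Q'" for v
    using \<phi>(3) by blast
  have \<phi>_add: "\<phi> (v + w) = \<phi> v + \<phi> w"
    and \<phi>_smult: "\<phi> (pair_smult a v) = pair_smult a (\<phi> v)"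
    and \<phi>_d: "\<phi> (pair_d cone v) = pair_d cone' (\<phi> v)"
    and \<phi>_gr: "v \<in> pair_gr n \<Longrightarrow> \<phi> v \<in> pair_gr n" for v w a n
    using \<phi>(1) unfolding pair_morphism_def by blast+
  show ?thesis
    unfolding dg_hom_def
  proof (intro conjI ballI allI)
    fix X assume "X \<in> mcar (qmod P Q cone)"
    then obtain v where v: "v \<in> Q" "X = coset P v"
      unfolding A.qmod_simps by blast
    show "qmap P Q P' \<phi> X \<in> mcar (qmod P' Q' cone')"
      using v map \<phi>_Q unfolding B.qmod_simps by simp
    show "qmap P Q P' \<phi> (msmul (qmod P Q cone) a X) = msmul (qmod P' Q' cone') a (qmap P Q P' \<phi> X)"
      for a
      using v map \<phi>_Q pair_submodule_smult[OF A.submodule_Q]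
      by (simp add: A.qmod_msmul B.qmod_msmul \<phi>_smult)
    show "qmap P Q P' \<phi> (mdelta (qmod P Q cone) X) = mdelta (qmod P' Q' cone') (qmap P Q P' \<phi> X)"
      using v map \<phi>_Q pair_submodule_d[OF A.submodule_Q]
      by (simp add: A.qmod_mdelta B.qmod_mdelta \<phi>_d)
    fix Y assume "Y \<in> mcar (qmod P Q cone)"
    then obtain w where w: "w \<in> Q" "Y = coset P w"
      unfolding A.qmod_simps by blast
    show "qmap P Q P' \<phi> (madd (qmod P Q cone) X Y) =
        madd (qmod P' Q' cone') (qmap P Q P' \<phi> X) (qmap P Q P' \<phi> Y)"
      using v w map \<phi>_Q
      by (simp add: A.qmod_madd B.qmod_madd pair_submodule_add[OF A.submodule_Q] \<phi>_add)
  next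
    fix n X assume "X \<in> mgr (qmod P Q cone) n"
    then obtain v where v: "v \<in> Q" "v \<in> pair_gr n" "X = coset P v"
      by (rule A.mgr_qmodE)
    then show "qmap P Q P' \<phi> X \<in> mgr (qmod P' Q' cone') n"
      using map \<phi>_Q \<phi>_gr B.coset_in_mgr by simp
  qed
qed

lemma inj_on_qmap:
  assumes A: "pair_quotient sc gr d P Q cone" and P': "pair_submodule P' cone'"
    and \<phi>: "pair_morphism \<phi> cone cone'" "\<phi> ` P \<subseteq> P'"
    and inj: "\<And>v. v \<in> Q \<Longrightarrow> \<phi> v \<in> P' \<Longrightarrow> v \<in> P"
  shows "inj_on (qmap P Q P' \<phi>) (mcar (qmod P Q cone))"
proof (rule inj_onI)
  interpret A: pair_quotient sc gr d P Q cone by fact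
  fix X Y assume "X \<in> mcar A.QM" "Y \<in> mcar A.QM" "qmap P Q P' \<phi> X = qmap P Q P' \<phi> Y"
  then obtain v w where "v \<in> Q" "w \<in> Q" "X = coset P v" "Y = coset P w" "\<phi> (v - w) \<in> P'"
    unfolding A.qmod_simps
    by (auto simp: qmap_coset[OF A P' \<phi>] coset_eq_iff[OF P'] pair_morphism_diff[OF \<phi>(1)])
  then show "X = Y"
    using inj pair_submodule_diff[OF A.submodule_Q] by (simp add: A.same_coset_iff)
qed

lemma qmap_image_eq:
  assumes A: "pair_quotient sc gr d P Q cone" and B: "pair_quotient sc gr d P' Q' cone'"
    and \<phi>: "pair_morphism \<phi> cone cone'" "\<phi> ` P \<subseteq> P'" "\<phi> ` Q \<subseteq> Q'"
    and surj: "\<And>w. w \<in> Q' \<Longrightarrow> \<exists>v\<in>Q. \<phi> v - w \<in> P'"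
  shows "qmap P Q P' \<phi> ` mcar (qmod P Q cone) = mcar (qmod P' Q' cone')"
proof
  interpret A: pair_quotient sc gr d P Q cone by fact
  interpret B: pair_quotient sc gr d P' Q' cone' by fact
  show "qmap P Q P' \<phi> ` mcar A.QM \<subseteq> mcar B.QM"
    using dg_hom_qmap[OF A B \<phi>] unfolding dg_hom_def by blast
  show "mcar B.QM \<subseteq> qmap P Q P' \<phi> ` mcar A.QM"
  proof
    fix X assume "X \<in> mcar B.QM"
    then obtain w where "w \<in> Q'" "X = coset P' w"
      unfolding B.qmod_simps by blast
    with surj obtain v where "v \<in> Q" "X = qmap P Q P' \<phi> (coset P v)"
      by (metis B.same_coset_iff qmap_coset[OF A B.submodule_P \<phi>(1,2)])
    then show "X \<in> qmap P Q P' \<phi> ` mcar A.QM"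
      unfolding A.qmod_simps by blast
  qed
qed

lemma qmap_image_eq_kernel:
  assumes A1: "pair_quotient sc gr d P1 Q1 c1" and A2: "pair_quotient sc gr d P2 Q2 c2"
    and A3: "pair_quotient sc gr d P3 Q3 c3"
    and \<phi>: "pair_morphism \<phi> c1 c2" "\<phi> ` P1 \<subseteq> P2" "\<phi> ` Q1 \<subseteq> Q2"
    and \<psi>: "pair_morphism \<psi> c2 c3" "\<psi> ` P2 \<subseteq> P3"
    and exact: "\<And>v. v \<in> Q2 \<Longrightarrow> \<psi> v \<in> P3 \<longleftrightarrow> (\<exists>u\<in>Q1. v - \<phi> u \<in> P2)"
  shows "qmap P1 Q1 P2 \<phi> ` mcar (qmod P1 Q1 c1) =
    {X \<in> mcar (qmod P2 Q2 c2). qmap P2 Q2 P3 \<psi> X = mzero (qmod P3 Q3 c3)}"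
proof -
  interpret A1: pair_quotient sc gr d P1 Q1 c1 by fact
  interpret A2: pair_quotient sc gr d P2 Q2 c2 by fact
  interpret A3: pair_quotient sc gr d P3 Q3 c3 by fact
  let ?f = "qmap P1 Q1 P2 \<phi>" and ?g = "qmap P2 Q2 P3 \<psi>"
  have f: "?f (coset P1 u) = coset P2 (\<phi> u)" if "u \<in> Q1" for u
    using qmap_coset[OF A1 A2.submodule_P \<phi>(1,2) that] .
  have kernel: "coset P2 v \<in> ?f ` mcar A1.QM \<longleftrightarrow> ?g (coset P2 v) = mzero A3.QM" if v: "v \<in> Q2" for v
  proof -
    have "coset P2 v \<in> ?f ` mcar A1.QM \<longleftrightarrow> (\<exists>u\<in>Q1. coset P2 v = coset P2 (\<phi> u))"
      unfolding A1.qmod_simps using f by (auto simp: image_iff)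
    also have "\<dots> \<longleftrightarrow> \<psi> v \<in> P3"
      using exact[OF v] by (simp add: A2.same_coset_iff)
    finally show ?thesis
      using qmap_coset[OF A2 A3.submodule_P \<psi> v] by (simp add: A3.qmod_simps A3.coset_eq_zero_iff)
  qed
  have f_in: "?f ` mcar A1.QM \<subseteq> mcar A2.QM"
    using dg_hom_qmap[OF A1 A2 \<phi>] unfolding dg_hom_def by blast
  show ?thesis
  proof (intro equalityI subsetI)
    fix X assume X: "X \<in> ?f ` mcar A1.QM"
    then have "X \<in> mcar A2.QM"
      using f_in by blast
    moreover obtain v where "v \<in> Q2" "X = coset P2 v"
      using \<open>X \<in> mcar A2.QM\<close> unfolding A2.qmod_simps by blast
    ultimately show "X \<in> {X \<in> mcar A2.QM. ?g X = mzero A3.QM}"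
      using X kernel by simp
  next
    fix X assume X: "X \<in> {X \<in> mcar A2.QM. ?g X = mzero A3.QM}"
    then obtain v where "v \<in> Q2" "X = coset P2 v"
      unfolding A2.qmod_simps by blast
    with X kernel show "X \<in> ?f ` mcar A1.QM"
      by simp
  qed
qed

lemma exact_qmod_splits:
  assumes SS: "dg_semisimple_quot gr d rad"
    and A1: "pair_quotient sc gr d P1 Q1 c1" and A2: "pair_quotient sc gr d P2 Q2 c2"
    and A3: "pair_quotient sc gr d P3 Q3 c3"
    and \<phi>: "pair_morphism \<phi> c1 c2" "\<phi> ` P1 \<subseteq> P2" "\<phi> ` Q1 \<subseteq> Q2"
    and \<psi>: "pair_morphism \<psi> c2 c3" "\<psi> ` P2 \<subseteq> P3" "\<psi> ` Q2 \<subseteq> Q3"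
    and inj: "\<And>v. v \<in> Q1 \<Longrightarrow> \<phi> v \<in> P2 \<Longrightarrow> v \<in> P1"
    and exact: "\<And>v. v \<in> Q2 \<Longrightarrow> \<psi> v \<in> P3 \<longleftrightarrow> (\<exists>u\<in>Q1. v - \<phi> u \<in> P2)"
    and surj: "\<And>w. w \<in> Q3 \<Longrightarrow> \<exists>v\<in>Q2. \<psi> v - w \<in> P3"
    and ann: "annihilated rad (qmod P1 Q1 c1)" "annihilated rad (qmod P2 Q2 c2)"
      "annihilated rad (qmod P3 Q3 c3)"
  obtains s where "dg_hom gr (qmod P3 Q3 c3) (qmod P2 Q2 c2) s"
    "\<And>X. X \<in> mcar (qmod P3 Q3 c3) \<Longrightarrow> qmap P2 Q2 P3 \<psi> (s X) = X"
proof -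
  have "\<exists>s. dg_hom gr (qmod P3 Q3 c3) (qmod P2 Q2 c2) s \<and>
      (\<forall>X\<in>mcar (qmod P3 Q3 c3). qmap P2 Q2 P3 \<psi> (s X) = X)"
    using SS[unfolded dg_semisimple_quot_def, rule_format,
        of "qmod P1 Q1 c1" "qmod P2 Q2 c2" "qmod P3 Q3 c3" "qmap P1 Q1 P2 \<phi>" "qmap P2 Q2 P3 \<psi>",
        unfolded conj_imp_eq_imp_imp, OF pair_quotient.dg_module_qmod[OF A1]
        pair_quotient.dg_module_qmod[OF A2] pair_quotient.dg_module_qmod[OF A3] ann
        dg_hom_qmap[OF A1 A2 \<phi>] dg_hom_qmap[OF A2 A3 \<psi>]
        inj_on_qmap[OF A1 pair_quotient.submodule_P[OF A2] \<phi>(1,2) inj]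
        qmap_image_eq[OF A2 A3 \<psi> surj] qmap_image_eq_kernel[OF A1 A2 A3 \<phi> \<psi>(1,2) exact]] .
  with that show ?thesis
    by blast
qed

text \<open>The sequence \<open>0 \<rightarrow> N/P \<rightarrow> Q/P \<rightarrow> Q/N \<rightarrow> 0\<close> of dg-modules over \<open>A/J\<close> splits.\<close>

lemma dg_ideal_section:
  assumes SS: "dg_semisimple_quot gr d rad"
    and ideals: "dg_ideal P" "dg_ideal N" "dg_ideal Q" and PN: "P \<subseteq> N" and NQ: "N \<subseteq> Q"
    and rad_Q: "\<And>j x. j \<in> rad \<Longrightarrow> x \<in> Q \<Longrightarrow> j * x \<in> P"
  obtains s where "dg_hom gr (qmod (N \<times> {0}) (Q \<times> {0}) False) (qmod (P \<times> {0}) (Q \<times> {0}) False) s"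
    "\<And>X. X \<in> mcar (qmod (N \<times> {0}) (Q \<times> {0}) False) \<Longrightarrow>
      qmap (P \<times> {0}) (Q \<times> {0}) (N \<times> {0}) id (s X) = X"
proof -
  have sub: "pair_submodule (I \<times> {0}) False" if "dg_ideal I" for I
    using pair_submodule_Times_zero[OF that] .
  have quot: "pair_quotient sc gr d (I \<times> {0}) (I' \<times> {0}) False" if "dg_ideal I" "dg_ideal I'"
    for I I'
    by unfold_locales (use sub that in blast)+
  have ann: "annihilated rad (qmod (P \<times> {0}) (I \<times> {0}) False)" if "dg_ideal I" "I \<subseteq> Q" for I
    by (rule pair_quotient.annihilated_qmod[OF quot[OF ideals(1) that(1)]])
      (use rad_Q that(2) in \<open>auto simp: pair_smult_def\<close>)
  have ann': "annihilated rad (qmod (N \<times> {0}) (Q \<times> {0}) False)"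
    by (rule pair_quotient.annihilated_qmod[OF quot[OF ideals(2,3)]])
      (use rad_Q PN in \<open>auto simp: pair_smult_def\<close>)
  have N_closed: "x \<in> N" if "x - y \<in> P" "y \<in> N" for x y
    using dg_ideal_add[OF ideals(2), of "x - y" y] that PN by auto
  show ?thesis
  proof (rule exact_qmod_splits[OF SS quot[OF ideals(1,2)] quot[OF ideals(1,3)] quot[OF ideals(2,3)]
        pair_morphism_id _ _ pair_morphism_id])
    show "id ` (N \<times> {0}) \<subseteq> Q \<times> {0}" "id ` (P \<times> {0}) \<subseteq> N \<times> {0}"
      using PN NQ by auto
    show "v \<in> P \<times> {0}" if "v \<in> N \<times> {0}" "id v \<in> P \<times> {0}" for v :: "'a \<times> 'a"
      using that by simp
    show "id v \<in> N \<times> {0} \<longleftrightarrow> (\<exists>u\<in>N \<times> {0}. v - id u \<in> P \<times> {0})"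
      for v :: "'a \<times> 'a"
    proof
      assume "id v \<in> N \<times> {0}"
      then show "\<exists>u\<in>N \<times> {0}. v - id u \<in> P \<times> {0}"
        using dg_ideal_zero[OF ideals(1)] by (intro bexI[of _ v]) (auto simp: mem_Times_iff)
    next
      assume "\<exists>u\<in>N \<times> {0}. v - id u \<in> P \<times> {0}"
      then obtain u where "u \<in> N \<times> {0}" "v - u \<in> P \<times> {0}"
        by auto
      then show "id v \<in> N \<times> {0}"
        using N_closed by (auto simp: mem_Times_iff)
    qed
    show "\<exists>v\<in>Q \<times> {0}. id v - w \<in> N \<times> {0}" if "w \<in> Q \<times> {0}" for w :: "'a \<times> 'a"
      using that dg_ideal_zero[OF ideals(2)] by (intro bexI[of _ w]) (auto simp: mem_Times_iff)
  qed (use that ann[OF ideals(2) NQ] ann[OF ideals(3) subset_refl] ann' in auto)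
qed

lemma dg_ideal_complement:
  assumes SS: "dg_semisimple_quot gr d rad"
    and ideals: "dg_ideal P" "dg_ideal N" "dg_ideal Q" and PN: "P \<subseteq> N" and NQ: "N \<subseteq> Q"
    and rad_Q: "\<And>j x. j \<in> rad \<Longrightarrow> x \<in> Q \<Longrightarrow> j * x \<in> P"
  shows "\<exists>C. dg_ideal C \<and> P \<subseteq> C \<and> C \<subseteq> Q \<and> N \<inter> C = P \<and> N + C = Q"
proof -
  interpret A2: pair_quotient sc gr d "P \<times> {0}" "Q \<times> {0}" False
    by unfold_locales (use pair_submodule_Times_zero ideals in blast)+
  interpret A3: pair_quotient sc gr d "N \<times> {0}" "Q \<times> {0}" False
    by unfold_locales (use pair_submodule_Times_zero ideals in blast)+
  obtain s where s: "dg_hom gr A3.QM A2.QM s" and s_right_inverse: "\<And>X. X \<in> mcar A3.QM \<Longrightarrow>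
      qmap (P \<times> {0}) (Q \<times> {0}) (N \<times> {0}) id (s X) = X"
    using dg_ideal_section[OF assms] by blast
  have g: "qmap (P \<times> {0}) (Q \<times> {0}) (N \<times> {0}) id (coset (P \<times> {0}) (x, 0)) = coset (N \<times> {0}) (x, 0)"
    if "x \<in> Q" for x
    using qmap_coset[OF A2.pair_quotient_axioms A3.submodule_P pair_morphism_id] PN that by auto
  have s_zero: "s (mzero A3.QM) = mzero A2.QM"
    using dg_hom_mzero[OF A3.dg_mod_axioms A2.dg_mod_axioms s] .
  \<comment> \<open>the preimage in \<open>Q\<close> of the image of the section\<close>
  define C where "C = {x. (x, 0) \<in> {v \<in> Q \<times> {0}. coset (P \<times> {0}) v \<in> s ` mcar A3.QM}}"
  have C_iff: "x \<in> C \<longleftrightarrow> x \<in> Q \<and> coset (P \<times> {0}) (x, 0) \<in> s ` mcar A3.QM" for x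
    unfolding C_def by auto
  have "dg_ideal C"
    unfolding C_def
    by (intro dg_ideal_pair_fst A2.pair_submodule_coset_preimage
        dg_submodule_image[OF A3.dg_mod_axioms A2.dg_mod_axioms s])
  moreover have "P \<subseteq> C"
  proof
    fix x assume x: "x \<in> P"
    then have "coset (P \<times> {0}) (x, 0) = s (mzero A3.QM)"
      using s_zero by (simp add: A2.qmod_simps A2.coset_eq_zero_iff)
    then show "x \<in> C"
      using x PN NQ A3.mzero_in unfolding C_iff by blast
  qed
  moreover have "N \<inter> C \<subseteq> P"
  proof
    fix x assume "x \<in> N \<inter> C"
    then obtain X where x: "x \<in> N" "x \<in> Q" and X: "X \<in> mcar A3.QM" "coset (P \<times> {0}) (x, 0) = s X"
      by (auto simp: C_iff)
    have "X = coset (N \<times> {0}) (x, 0)"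
      using s_right_inverse[OF X(1)] X(2) g[OF x(2)] by simp
    also have "\<dots> = mzero A3.QM"
      using x(1) by (simp add: A3.qmod_simps A3.coset_eq_zero_iff)
    finally have "coset (P \<times> {0}) (x, 0) = mzero A2.QM"
      using X(2) s_zero by simp
    then show "x \<in> P"
      by (simp add: A2.qmod_simps A2.coset_eq_zero_iff)
  qed
  moreover have "Q \<subseteq> N + C"
  proof
    fix x assume x: "x \<in> Q"
    then have X: "coset (N \<times> {0}) (x, 0) \<in> mcar A3.QM"
      unfolding A3.qmod_simps by blast
    then have "s (coset (N \<times> {0}) (x, 0)) \<in> mcar A2.QM"
      using s unfolding dg_hom_def by blast
    then obtain c where c: "c \<in> Q" "s (coset (N \<times> {0}) (x, 0)) = coset (P \<times> {0}) (c, 0)"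
      unfolding A2.qmod_simps by auto
    then have "c \<in> C"
      unfolding C_iff using X by (metis image_eqI)
    moreover have "coset (N \<times> {0}) (x, 0) = coset (N \<times> {0}) (c, 0)"
      using s_right_inverse[OF X] c g[OF c(1)] by simp
    then have "x - c \<in> N"
      by (simp add: A3.same_coset_iff)
    ultimately show "x \<in> N + C"
      using set_plus_intro[of "x - c" N c C] by simp
  qed
  moreover have "C \<subseteq> Q"
    using C_iff by blast
  moreover have "N + C \<subseteq> Q"
    using NQ \<open>C \<subseteq> Q\<close> dg_ideal_add[OF ideals(3)] by (auto elim!: set_plus_elim)
  ultimately show ?thesis
    using PN by blast
qed

end

definition stabilizes :: "(nat \<Rightarrow> 'b) \<Rightarrow> bool" where
  "stabilizes f \<longleftrightarrow> (\<exists>m. \<forall>n\<ge>m. f n = f m)"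

lemma stabilizesI:
  assumes "\<And>n. n \<ge> m \<Longrightarrow> f (Suc n) = f n"
  shows "stabilizes f"
proof -
  have "f n = f m" if "n \<ge> m" for n
    using that by (induction n rule: dec_induct) (simp_all add: assms)
  then show ?thesis
    unfolding stabilizes_def by blast
qed

lemma nilpotent_set_power_eq_zero:
  assumes "nilpotent_set J" "j \<in> J"
  obtains k where "j ^ k = 0"
proof -
  obtain k where k: "\<forall>xs. length xs = k \<and> set xs \<subseteq> J \<longrightarrow> prod_list xs = 0"
    using assms(1) unfolding nilpotent_set_def by blast
  have "length (replicate k j) = k \<and> set (replicate k j) \<subseteq> J"
    using assms(2) by auto
  then have "prod_list (replicate k j) = 0"
    using k by blast
  then show ?thesis
    using that by (simp add: prod_list_replicate)
qed

context dg_algebra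
begin

lemma dg_artinian_iff: "dg_artinian gr d \<longleftrightarrow>
    (\<forall>I. (\<forall>n. dg_ideal (I n) \<and> I (Suc n) \<subseteq> I n) \<longrightarrow> stabilizes I)"
  unfolding dg_artinian_def stabilizes_def left_dg_ideal_iff ..

lemma dg_noetherian_iff: "dg_noetherian gr d \<longleftrightarrow>
    (\<forall>I. (\<forall>n. dg_ideal (I n) \<and> I n \<subseteq> I (Suc n)) \<longrightarrow> stabilizes I)"
  unfolding dg_noetherian_def stabilizes_def left_dg_ideal_iff ..

section \<open>Noetherianity\<close>

definition dg_complement :: "'a set \<Rightarrow> 'a set \<Rightarrow> 'a set \<Rightarrow> 'a set" where
  "dg_complement P N Q = (SOME C. dg_ideal C \<and> P \<subseteq> C \<and> C \<subseteq> Q \<and> N \<inter> C = P \<and> N + C = Q)"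

lemma dg_complement:
  assumes "dg_semisimple_quot gr d rad"
    and "dg_ideal P" "dg_ideal N" "dg_ideal Q" "P \<subseteq> N" "N \<subseteq> Q"
    and "\<And>j x. j \<in> rad \<Longrightarrow> x \<in> Q \<Longrightarrow> j * x \<in> P"
  defines "C \<equiv> dg_complement P N Q"
  shows "dg_ideal C \<and> P \<subseteq> C \<and> C \<subseteq> Q \<and> N \<inter> C = P \<and> N + C = Q"
  unfolding C_def dg_complement_def by (rule someI_ex) (rule dg_ideal_complement[OF assms(1-7)])

lemma dg_ideal_eq_if_common_complement:
  assumes N: "dg_ideal N" "dg_ideal N'" "N \<subseteq> N'" "P \<subseteq> N"
    and D: "N' \<inter> D = P" "N' \<subseteq> N + D"
  shows "N' = N"
proof
  show "N' \<subseteq> N"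
  proof
    fix x assume x: "x \<in> N'"
    then have "x \<in> N + D"
      using D(2) by blast
    then obtain a e where ae: "a \<in> N" "e \<in> D" "x = a + e"
      by (auto elim: set_plus_elim)
    then have "e \<in> N'"
      using dg_ideal_diff[OF N(2) x, of a] N(3) by auto
    then have "e \<in> N"
      using ae(2) D(1) N(4) by blast
    then show "x \<in> N"
      using ae dg_ideal_add[OF N(1)] by simp
  qed
qed (rule N(3))

lemma dg_complement_step:
  assumes SS: "dg_semisimple_quot gr d rad"
    and ideals: "dg_ideal P" "dg_ideal N'" "dg_ideal D" "dg_ideal Q"
    and rad_Q: "\<And>j x. j \<in> rad \<Longrightarrow> x \<in> Q \<Longrightarrow> j * x \<in> P"
    and chain: "N \<subseteq> N'" "P \<subseteq> N" "N' \<subseteq> Q"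
    and D: "P \<subseteq> D" "D \<subseteq> Q" "N \<inter> D = P" "N + D = Q"
  defines "D' \<equiv> dg_complement P (N' \<inter> D) D"
  shows "dg_ideal D' \<and> P \<subseteq> D' \<and> D' \<subseteq> D \<and> N' \<inter> D' = P \<and> N' + D' = Q"
proof -
  have "dg_ideal D' \<and> P \<subseteq> D' \<and> D' \<subseteq> D \<and> (N' \<inter> D) \<inter> D' = P \<and> (N' \<inter> D) + D' = D"
    unfolding D'_def
  proof (rule dg_complement[OF SS ideals(1) dg_ideal_Int[OF ideals(2,3)] ideals(3)])
    show "P \<subseteq> N' \<inter> D"
      using chain D by blast
    show "j * x \<in> P" if "j \<in> rad" "x \<in> D" for j x
      using rad_Q that D(2) by blast
  qed simp
  then have D': "dg_ideal D'" "P \<subseteq> D'" "D' \<subseteq> D" "(N' \<inter> D) \<inter> D' = P" "(N' \<inter> D) + D' = D"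
    by blast+
  have "Q \<subseteq> N' + D'"
  proof
    fix x assume "x \<in> Q"
    then have "x \<in> N + D"
      using D(4) by simp
    then obtain a e where "a \<in> N" "e \<in> D" "x = a + e"
      by (auto elim: set_plus_elim)
    moreover have "e \<in> (N' \<inter> D) + D'"
      using D'(5) \<open>e \<in> D\<close> by simp
    then obtain b c where "b \<in> N' \<inter> D" "c \<in> D'" "e = b + c"
      by (auto elim: set_plus_elim)
    ultimately have "a + b \<in> N'" "c \<in> D'" "x = (a + b) + c"
      using chain(1) dg_ideal_add[OF ideals(2)] by (auto simp: add.assoc)
    then show "x \<in> N' + D'"
      using set_plus_intro by metis
  qed
  moreover have "N' + D' \<subseteq> Q"
  proof
    fix x assume "x \<in> N' + D'"
    then obtain a c where "a \<in> N'" "c \<in> D'" "x = a + c"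
      by (auto elim: set_plus_elim)
    then show "x \<in> Q"
      using chain(3) D'(3) D(2) dg_ideal_add[OF ideals(4)] by blast
  qed
  moreover have "N' \<inter> D' = P"
    using D'(3,4) by blast
  ultimately show ?thesis
    using D'(1-3) by blast
qed

text \<open>The complements \<open>D n\<close> of an ascending chain \<open>N n\<close> in \<open>[P, Q]\<close> can be chosen
  descending; once the \<open>D n\<close> are constant by DCC, so are the \<open>N n\<close>.\<close>

lemma stabilizes_in_semisimple_interval:
  assumes SS: "dg_semisimple_quot gr d rad" and art: "dg_artinian gr d"
    and ideals: "dg_ideal P" "dg_ideal Q" and PQ: "P \<subseteq> Q"
    and rad_Q: "\<And>j x. j \<in> rad \<Longrightarrow> x \<in> Q \<Longrightarrow> j * x \<in> P"
    and N: "\<And>n. dg_ideal (N n)" "\<And>n. P \<subseteq> N n" "\<And>n. N n \<subseteq> Q" "\<And>n. N n \<subseteq> N (Suc n)"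
  shows "stabilizes N"
proof -
  define D where
    "D = rec_nat (dg_complement P (N 0) Q) (\<lambda>n Dn. dg_complement P (N (Suc n) \<inter> Dn) Dn)"
  have D: "dg_ideal (D n) \<and> P \<subseteq> D n \<and> D n \<subseteq> Q \<and> N n \<inter> D n = P \<and> N n + D n = Q" for n
  proof (induction n)
    case 0
    show ?case
      unfolding D_def using dg_complement[OF SS ideals(1) N(1) ideals(2)] N rad_Q by simp
  next
    case (Suc n)
    then show ?case
      unfolding D_def
      using dg_complement_step[OF SS ideals(1) N(1) _ ideals(2) rad_Q N(4) N(2) N(3), of "D n"]
      by (simp add: D_def) (meson order_trans)
  qed
  have "D (Suc n) \<subseteq> D n" for n
    using dg_complement_step[OF SS ideals(1) N(1) _ ideals(2) rad_Q N(4) N(2) N(3), of "D n"]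
      D[of n]
    unfolding D_def by simp
  then obtain m where m: "\<forall>n\<ge>m. D n = D m"
    using art D unfolding dg_artinian_iff stabilizes_def by blast
  show ?thesis
  proof (rule stabilizesI)
    fix n assume "n \<ge> m"
    then have "D (Suc n) = D n"
      using m by (metis le_SucI)
    then have "N (Suc n) \<inter> D n = P"
      using D[of "Suc n"] by simp
    moreover have "N (Suc n) \<subseteq> N n + D n"
      using N(3)[of "Suc n"] D[of n] by simp
    ultimately show "N (Suc n) = N n"
      by (rule dg_ideal_eq_if_common_complement[OF N(1) N(1) N(4) N(2)])
  qed
qed

definition rad_homogeneous :: "'a set" where
  "rad_homogeneous = {j \<in> rad. \<exists>p. j \<in> gr p}"

text \<open>The \<open>i\<close>-th socle \<open>{x. J\<^sup>i x = 0}\<close>; as \<open>J\<close> is graded, it suffices to test products of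
  \<open>i\<close> homogeneous elements of \<open>J\<close>.\<close>

definition soc :: "nat \<Rightarrow> 'a set" where
  "soc i = {x. \<forall>js. length js = i \<and> set js \<subseteq> rad_homogeneous \<longrightarrow> prod_list js * x = 0}"

lemma prod_list_rad_homogeneous_in_gr: "set js \<subseteq> rad_homogeneous \<Longrightarrow> \<exists>p. prod_list js \<in> gr p"
proof (induction js)
  case (Cons j js)
  then obtain p q where "j \<in> gr p" "prod_list js \<in> gr q"
    unfolding rad_homogeneous_def by auto
  then have "j * prod_list js \<in> gr (p + q)"
    by (rule gr_mult)
  then show ?case
    by auto
qed (use gr_one in auto)

lemma soc_0: "soc 0 = {0}"
  unfolding soc_def by auto

lemma soc_eq_UNIV:
  assumes "nilpotent_set rad"
  obtains k where "soc k = UNIV"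
proof -
  obtain k where "\<forall>js. length js = k \<and> set js \<subseteq> rad \<longrightarrow> prod_list js = 0"
    using assms unfolding nilpotent_set_def by blast
  then have "soc k = UNIV"
    unfolding soc_def rad_homogeneous_def by auto
  then show ?thesis
    using that by blast
qed

lemma soc_mono: "soc i \<subseteq> soc (Suc i)"
proof
  fix x assume x: "x \<in> soc i"
  show "x \<in> soc (Suc i)"
    unfolding soc_def
  proof (intro CollectI allI impI)
    fix js :: "'a list" assume js: "length js = Suc i \<and> set js \<subseteq> rad_homogeneous"
    then obtain j js' where "js = j # js'"
      by (cases js) auto
    with x js show "prod_list js * x = 0"
      unfolding soc_def by (auto simp: mult.assoc)
  qed
qed

lemma rad_mult_soc_Suc:
  assumes j: "j \<in> rad" and x: "x \<in> soc (Suc i)"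
  shows "j * x \<in> soc i"
  unfolding soc_def
proof (intro CollectI allI impI)
  fix js :: "'a list" assume js: "length js = i \<and> set js \<subseteq> rad_homogeneous"
  have "prod_list js * (j * x) = prod_list js * ((\<Sum>n\<in>hsupp j. hcomp n j) * x)"
    by (simp add: sum_hcomp)
  also have "\<dots> = (\<Sum>n\<in>hsupp j. prod_list (js @ [hcomp n j]) * x)"
    by (simp add: sum_distrib_left sum_distrib_right mult.assoc)
  also have "\<dots> = 0"
  proof (rule sum.neutral, intro ballI)
    fix n
    have "hcomp n j \<in> rad_homogeneous"
      using rad_hcomp[OF j] unfolding rad_homogeneous_def by blast
    then have "length (js @ [hcomp n j]) = Suc i \<and> set (js @ [hcomp n j]) \<subseteq> rad_homogeneous"
      using js by simp
    then show "prod_list (js @ [hcomp n j]) * x = 0"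
      using x unfolding soc_def by blast
  qed
  finally show "prod_list js * (j * x) = 0" .
qed

text \<open>The prefix \<open>zs\<close> makes the induction work: by the Leibniz rule,
  \<open>d (j * p) = d j * p \<plusminus> j * d p\<close>, and \<open>d j\<close> is again a homogeneous radical element.\<close>

lemma prod_d_prod_mult_soc:
  "length zs + length js = i \<Longrightarrow> set zs \<subseteq> rad_homogeneous \<Longrightarrow> set js \<subseteq> rad_homogeneous \<Longrightarrow>
    x \<in> soc i \<Longrightarrow> prod_list zs * d (prod_list js) * x = 0"
proof (induction js arbitrary: zs)
  case (Cons j js)
  then obtain p where jp: "j \<in> gr p" "j \<in> rad"
    unfolding rad_homogeneous_def by auto
  have dj: "d j \<in> rad_homogeneous"
    unfolding rad_homogeneous_def using rad_d jp d_gr by blast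
  have "prod_list zs * d (prod_list (j # js)) * x =
      prod_list (zs @ d j # js) * x + sgnd p * (prod_list (zs @ [j]) * d (prod_list js) * x)"
    using d_mult[OF jp(1), of "prod_list js"]
    by (simp add: distrib_left distrib_right mult.assoc sgnd_commute)
  also have "length (zs @ d j # js) = i \<and> set (zs @ d j # js) \<subseteq> rad_homogeneous"
    using Cons.prems dj by simp
  then have "prod_list (zs @ d j # js) * x = 0"
    using Cons.prems(4) unfolding soc_def by blast
  also have "prod_list (zs @ [j]) * d (prod_list js) * x = 0"
    using Cons.IH[of "zs @ [j]"] Cons.prems by simp
  finally show ?case
    by simp
qed simp

lemma soc_mult:
  assumes x: "x \<in> soc i"
  shows "a * x \<in> soc i"
  unfolding soc_def
proof (intro CollectI allI impI)
  fix js :: "'a list" assume js: "length js = i \<and> set js \<subseteq> rad_homogeneous"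
  show "prod_list js * (a * x) = 0"
  proof (cases js rule: rev_cases)
    case Nil
    then show ?thesis
      using x js unfolding soc_def by auto
  next
    case (snoc js' j)
    then have j: "j \<in> rad" "\<exists>p. j \<in> gr p"
      using js unfolding rad_homogeneous_def by auto
    have "prod_list js * (a * x) = prod_list js' * (j * (\<Sum>n\<in>hsupp a. hcomp n a)) * x"
      using snoc by (simp add: sum_hcomp mult.assoc)
    also have "\<dots> = (\<Sum>n\<in>hsupp a. prod_list (js' @ [j * hcomp n a]) * x)"
      by (simp add: sum_distrib_left sum_distrib_right mult.assoc)
    also have "\<dots> = 0"
    proof (rule sum.neutral, intro ballI)
      fix n
      have "j * hcomp n a \<in> rad_homogeneous"
        using j rad_mult_right gr_mult unfolding rad_homogeneous_def by blast
      then have "length (js' @ [j * hcomp n a]) = i \<and> set (js' @ [j * hcomp n a]) \<subseteq> rad_homogeneous"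
        using js snoc by simp
      then show "prod_list (js' @ [j * hcomp n a]) * x = 0"
        using x unfolding soc_def by blast
    qed
    finally show ?thesis .
  qed
qed

lemma soc_hcomp:
  assumes x: "x \<in> soc i"
  shows "hcomp n x \<in> soc i"
  unfolding soc_def
proof (intro CollectI allI impI)
  fix js :: "'a list" assume js: "length js = i \<and> set js \<subseteq> rad_homogeneous"
  then obtain p where p: "prod_list js \<in> gr p"
    using prod_list_rad_homogeneous_in_gr by blast
  have "prod_list js * hcomp n x = hcomp (n + p) (prod_list js * x)"
    by (simp add: hcomp_mult_left[OF p])
  also have "\<dots> = 0"
    using x js unfolding soc_def by simp
  finally show "prod_list js * hcomp n x = 0" .
qed

lemma soc_d:
  assumes x: "x \<in> soc i"
  shows "d x \<in> soc i"
  unfolding soc_def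
proof (intro CollectI allI impI)
  fix js :: "'a list" assume js: "length js = i \<and> set js \<subseteq> rad_homogeneous"
  then obtain p where p: "prod_list js \<in> gr p"
    using prod_list_rad_homogeneous_in_gr by blast
  have "0 = d (prod_list js * x)"
    using x js unfolding soc_def by simp
  also have "\<dots> = sgnd p * (prod_list js * d x)"
    using d_mult[OF p, of x] prod_d_prod_mult_soc[of "[]" js i x] js x by (simp add: mult.assoc)
  finally have "sgnd p * (sgnd p * (prod_list js * d x)) = 0"
    by simp
  then show "prod_list js * d x = 0"
    by (simp flip: mult.assoc)
qed

lemma dg_ideal_soc: "dg_ideal (soc i)"
  unfolding dg_ideal_def using soc_mult soc_d soc_hcomp
  by (auto simp: soc_def distrib_left)

lemma stabilizes_Int_soc_Suc:
  assumes SS: "dg_semisimple_quot gr d rad" and art: "dg_artinian gr d"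
    and I: "\<And>n. dg_ideal (I n)" "\<And>n. I n \<subseteq> I (Suc n)"
    and stable: "stabilizes (\<lambda>n. I n \<inter> soc i)"
  shows "stabilizes (\<lambda>n. I n \<inter> soc (Suc i))"
proof -
  have I_mono: "m \<le> n \<Longrightarrow> I m \<subseteq> I n" for m n
    using I(2) by (rule lift_Suc_mono_le)
  define N where "N n = (I n \<inter> soc (Suc i)) + soc i" for n
  have "stabilizes N"
  proof (rule stabilizes_in_semisimple_interval[OF SS art dg_ideal_soc dg_ideal_soc soc_mono
        rad_mult_soc_Suc])
    show "dg_ideal (N n)" for n
      unfolding N_def using dg_ideal_plus dg_ideal_Int I(1) dg_ideal_soc by blast
    show "soc i \<subseteq> N n" for n
      unfolding N_def using set_plus_intro[of 0 _ _ "soc i"] dg_ideal_zero[OF dg_ideal_Int[OF I(1)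
            dg_ideal_soc]] by force
    show "N n \<subseteq> soc (Suc i)" for n
      unfolding N_def using soc_mono[of i] dg_ideal_add[OF dg_ideal_soc[of "Suc i"]]
      by (auto elim!: set_plus_elim)
    show "N n \<subseteq> N (Suc n)" for n
      unfolding N_def using I(2) by (intro set_plus_mono2) auto
  qed
  then obtain m1 where m1: "\<forall>n\<ge>m1. N n = N m1"
    unfolding stabilizes_def by blast
  obtain m0 where m0: "\<forall>n\<ge>m0. I n \<inter> soc i = I m0 \<inter> soc i"
    using stable unfolding stabilizes_def by blast
  show ?thesis
  proof (rule stabilizesI)
    fix n assume n: "n \<ge> max m0 m1"
    then have "m0 \<le> n" "m1 \<le> n"
      by auto
    then have "N (Suc n) = N m1" "N n = N m1" "I (Suc n) \<inter> soc i = I m0 \<inter> soc i"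
      "I n \<inter> soc i = I m0 \<inter> soc i"
      using m0 m1 le_SucI by blast+
    then have N_eq: "N (Suc n) = N n" and I_eq: "I (Suc n) \<inter> soc i = I n \<inter> soc i"
      by simp_all
    show "I (Suc n) \<inter> soc (Suc i) = I n \<inter> soc (Suc i)"
    proof
      show "I (Suc n) \<inter> soc (Suc i) \<subseteq> I n \<inter> soc (Suc i)"
      proof
        fix y assume y: "y \<in> I (Suc n) \<inter> soc (Suc i)"
        have "y + 0 \<in> N (Suc n)"
          unfolding N_def by (rule set_plus_intro[OF y dg_ideal_zero[OF dg_ideal_soc]])
        then have "y \<in> N n"
          using N_eq by simp
        then obtain x l where xl: "x \<in> I n \<inter> soc (Suc i)" "l \<in> soc i" "y = x + l"
          unfolding N_def by (auto elim: set_plus_elim)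
        then have "l \<in> I (Suc n)"
          using y dg_ideal_diff[OF I(1), of y "Suc n" x] I(2) by auto
        then have "l \<in> I n"
          using xl(2) I_eq by blast
        then show "y \<in> I n \<inter> soc (Suc i)"
          using xl y dg_ideal_add[OF I(1)] by auto
      qed
    qed (use I(2) in blast)
  qed
qed

lemma dg_noetherian_if_artinian:
  assumes SS: "dg_semisimple_quot gr d rad" and art: "dg_artinian gr d"
    and nil: "nilpotent_set rad"
  shows "dg_noetherian gr d"
  unfolding dg_noetherian_iff
proof (intro allI impI)
  fix I assume I: "\<forall>n. dg_ideal (I n) \<and> I n \<subseteq> I (Suc n)"
  have layers: "stabilizes (\<lambda>n. I n \<inter> soc i)" for i
  proof (induction i)
    case 0
    have "I n \<inter> soc 0 = {0}" for n
      using I dg_ideal_zero by (auto simp: soc_0)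
    then show ?case
      unfolding stabilizes_def by simp
  next
    case (Suc i)
    then show ?case
      using stabilizes_Int_soc_Suc[OF SS art] I by blast
  qed
  obtain k where "soc k = UNIV"
    using soc_eq_UNIV[OF nil] .
  with layers[of k] show "stabilizes I"
    by simp
qed

section \<open>Acyclicity\<close>

lemma dg_ideal_rad: "dg_ideal rad"
  unfolding dg_ideal_def by (intro conjI ballI allI rad_zero rad_add rad_uminus rad_mult_left
    rad_d rad_hcomp)

lemma pair_submodule_rad_Times_rad: "pair_submodule (rad \<times> rad) cone"
  unfolding pair_submodule_def pair_smult_def pair_d_def pair_hcomp_def
  by (intro conjI ballI allI)
    (auto intro!: rad_zero rad_add rad_uminus rad_mult_left rad_d rad_hcomp
      rad_twist simp: mem_Times_iff)

lemma pair_submodule_zero_Times: "dg_ideal I \<Longrightarrow> pair_submodule ({0} \<times> I) False"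
  unfolding pair_submodule_def dg_ideal_def pair_smult_def pair_d_def pair_hcomp_def
  by (auto simp: mem_Times_iff)

definition shift_projection :: "'a \<times> 'a \<Rightarrow> 'a \<times> 'a" where
  "shift_projection v = (0, snd v)"

lemma pair_morphism_shift_projection: "pair_morphism shift_projection True False"
  unfolding pair_morphism_def shift_projection_def pair_smult_def pair_d_def pair_gr_def by auto

lemma shift_projection_Times: "shift_projection ` (A \<times> B) \<subseteq> {0} \<times> B"
  unfolding shift_projection_def by auto

text \<open>The exact sequence \<open>0 \<rightarrow> A/J \<rightarrow> cone(id\<^bsub>A/J\<^esub>) \<rightarrow> (A/J)[1] \<rightarrow> 0\<close> splits.\<close>

lemma cone_section:
  assumes SS: "dg_semisimple_quot gr d rad"
  obtains s where "dg_hom gr (qmod ({0} \<times> rad) ({0} \<times> UNIV) False) (qmod (rad \<times> rad) UNIV True) s"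
    "\<And>X. X \<in> mcar (qmod ({0} \<times> rad) ({0} \<times> UNIV) False) \<Longrightarrow>
      qmap (rad \<times> rad) UNIV ({0} \<times> rad) shift_projection (s X) = X"
proof -
  let ?P1 = "rad \<times> {0}" and ?Q1 = "UNIV \<times> {0}" and ?P2 = "rad \<times> rad" and ?Q2 = "UNIV"
    and ?P3 = "{0} \<times> rad" and ?Q3 = "{0} \<times> UNIV"
  interpret A1: pair_quotient sc gr d ?P1 ?Q1 True
    by unfold_locales (intro pair_submodule_Times_zero dg_ideal_rad dg_ideal_UNIV)+
  interpret A2: pair_quotient sc gr d ?P2 ?Q2 True
    by unfold_locales (rule pair_submodule_rad_Times_rad pair_submodule_UNIV)+
  interpret A3: pair_quotient sc gr d ?P3 ?Q3 False
    by unfold_locales (intro pair_submodule_zero_Times dg_ideal_rad dg_ideal_UNIV)+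
  show ?thesis
  proof (rule exact_qmod_splits[OF SS A1.pair_quotient_axioms A2.pair_quotient_axioms
        A3.pair_quotient_axioms pair_morphism_id _ _ pair_morphism_shift_projection
        shift_projection_Times])
    show "v \<in> ?P1" if "v \<in> ?Q1" "id v \<in> ?P2" for v :: "'a \<times> 'a"
      using that by auto
    show "shift_projection v \<in> ?P3 \<longleftrightarrow> (\<exists>u\<in>?Q1. v - id u \<in> ?P2)" for v :: "'a \<times> 'a"
    proof
      assume "shift_projection v \<in> ?P3"
      then have "v - id (fst v, 0) \<in> ?P2"
        using rad_zero by (cases v) (simp add: shift_projection_def)
      then show "\<exists>u\<in>?Q1. v - id u \<in> ?P2"
        by (intro bexI[of _ "(fst v, 0)"]) simp_all
    qed (auto simp: shift_projection_def mem_Times_iff)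
    show "\<exists>v\<in>?Q2. shift_projection v - w \<in> ?P3" if "w \<in> ?Q3" for w :: "'a \<times> 'a"
      using that rad_zero by (intro bexI[of _ w]) (auto simp: shift_projection_def mem_Times_iff)
  qed (use that rad_zero rad_mult_right in
      \<open>auto simp: shift_projection_def pair_smult_def mem_Times_iff
      intro!: A1.annihilated_qmod A2.annihilated_qmod A3.annihilated_qmod\<close>)
qed

text \<open>Applying the section to the class of \<open>(0, 1)\<close> yields a contracting homotopy modulo
  the radical.\<close>

lemma contraction_mod_rad:
  assumes SS: "dg_semisimple_quot gr d rad"
  obtains h where "h \<in> gr (- 1)" "1 - d h \<in> rad"
proof -
  interpret A2: pair_quotient sc gr d "rad \<times> rad" UNIV True
    by unfold_locales (rule pair_submodule_rad_Times_rad pair_submodule_UNIV)+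
  interpret A3: pair_quotient sc gr d "{0} \<times> rad" "{0} \<times> UNIV" False
    by unfold_locales (intro pair_submodule_zero_Times dg_ideal_rad dg_ideal_UNIV)+
  obtain s where s: "dg_hom gr A3.QM A2.QM s"
    and s_right_inverse: "\<And>X. X \<in> mcar A3.QM \<Longrightarrow>
      qmap (rad \<times> rad) UNIV ({0} \<times> rad) shift_projection (s X) = X"
    using cone_section[OF SS] by blast
  define Y where "Y = coset ({0} \<times> rad) (0, 1)"
  have Y: "Y \<in> mgr A3.QM (- 1)" "mdelta A3.QM Y = mzero A3.QM"
    unfolding Y_def using gr_one
    by (auto simp: A3.qmod_simps A3.qmod_mdelta pair_gr_def pair_d_def A3.coset_eq_zero_iff
        intro!: A3.coset_in_mgr)
  have "s Y \<in> mgr A2.QM (- 1)"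
    using s Y(1) unfolding dg_hom_def by blast
  then obtain u v where uv: "u \<in> gr (- 1)" "v \<in> gr 0" "s Y = coset (rad \<times> rad) (u, v)"
    by (auto elim!: A2.mgr_qmodE simp: pair_gr_def)
  have "coset ({0} \<times> rad) (0, v) = Y"
    using s_right_inverse[OF A3.mgr_in[OF Y(1)]] uv(3) qmap_coset[OF A2.pair_quotient_axioms
        A3.submodule_P pair_morphism_shift_projection shift_projection_Times, of "(u, v)"]
    by (simp add: shift_projection_def)
  then have v: "v - 1 \<in> rad"
    by (simp add: Y_def A3.same_coset_iff)
  have "coset (rad \<times> rad) (pair_d True (u, v)) = mdelta A2.QM (s Y)"
    using uv(3) by (simp add: A2.qmod_mdelta)
  also have "\<dots> = mzero A2.QM"
    using s Y A3.mgr_in dg_hom_mzero[OF A3.dg_mod_axioms A2.dg_mod_axioms s]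
    unfolding dg_hom_def by metis
  finally have du_v: "d u + v \<in> rad"
    using twist_homogeneous[OF uv(2)] by (simp add: A2.qmod_simps A2.coset_eq_zero_iff pair_d_def)
  have "1 - d (- u) = (d u + v) - (v - 1)"
    by (simp add: d_uminus)
  then have "1 - d (- u) \<in> rad"
    using rad_diff[OF du_v v] by (simp only:)
  then show ?thesis
    using that gr_uminus[OF uv(1)] by blast
qed

lemma contraction_of_nilpotent_defect:
  assumes h: "h \<in> gr (- 1)" and nil: "(1 - d h) ^ k = 0"
  obtains h' where "h' \<in> gr (- 1)" "d h' = 1"
proof -
  define j where "j = 1 - d h"
  have j: "j \<in> gr 0" "d j = 0"
    unfolding j_def using gr_diff[OF gr_one, of "d h"] d_gr[OF h] by (simp_all add: d_diff)
  have powers: "j ^ i \<in> gr 0 \<and> d (j ^ i) = 0" for i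
    by (induction i) (use gr_one gr_mult[OF j(1)] d_mult_cycle[OF j(1)] j(2) in auto)
  define w where "w = (\<Sum>i<k. j ^ i)"
  have w: "w \<in> gr 0" "d w = 0"
    unfolding w_def using powers by (auto intro: gr_sum simp: d_sum)
  moreover have "d h * w = 1"
    using one_minus_mult_geometric_sum[of j k] nil unfolding w_def j_def by simp
  ultimately have "h * w \<in> gr (- 1)" "d (h * w) = 1"
    using gr_mult[OF h w(1)] d_mult_cycle[OF h w(2)] by simp_all
  then show ?thesis
    using that by blast
qed

lemma acyclic_if_contraction:
  assumes "h \<in> gr (- 1)" "d h = 1"
  shows "acyclic_dg d"
  unfolding acyclic_dg_def
proof (intro equalityI subsetI)
  fix z assume "z \<in> {a. d a = 0}"
  then have "d (h * z) = z"
    using d_mult_cycle[OF assms(1)] assms(2) by simp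
  then show "z \<in> range d"
    by (metis rangeI)
qed auto

lemma acyclic_if_nilpotent_rad:
  assumes SS: "dg_semisimple_quot gr d rad" and nil: "nilpotent_set rad"
  shows "acyclic_dg d"
proof -
  obtain h where h: "h \<in> gr (- 1)" "1 - d h \<in> rad"
    using contraction_mod_rad[OF SS] .
  obtain k where "(1 - d h) ^ k = 0"
    using nilpotent_set_power_eq_zero[OF nil h(2)] .
  then obtain h' where "h' \<in> gr (- 1)" "d h' = 1"
    using contraction_of_nilpotent_defect[OF h(1)] by blast
  then show ?thesis
    by (rule acyclic_if_contraction)
qed

end

theorem theorem4p1:
  fixes sc :: "'r::comm_ring_1 \<Rightarrow> 'a::ring_1"
    and gr :: "int \<Rightarrow> 'a set"
    and d :: "'a \<Rightarrow> 'a"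
  assumes "graded_dg_algebra sc gr d"
    and "dg_semiprimary gr d"
    and "dg_artinian gr d"
    and "nilpotent_set (dgrad gr d)"
  shows "dg_noetherian gr d \<and> acyclic_dg d"
proof -
  interpret dg_algebra sc gr d
    by unfold_locales (fact assms(1))
  have SS: "dg_semisimple_quot gr d rad"
    using assms(2) unfolding dg_semiprimary_def by blast
  show ?thesis
    using dg_noetherian_if_artinian[OF SS assms(3,4)] acyclic_if_nilpotent_rad[OF SS assms(4)]
    by blast
qed

end
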